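(* Let $(\gamma_k)_{k\ge3}$ be non-negative weights with $\gamma_k>0$ for at least one $k$, and suppose the power series $\sum_{k\ge1}\gamma_{k+2}z^k$ has radius of convergence $0$ (type III). Let $\mathsf{D}_n^\omega$ be the random dissection of the $n$-gon drawn with probability proportional to $\prod_F\gamma_{|F|}$, and let $v_n$ be a uniformly random vertex of $\mathsf{D}_n^\omega$. Then, as $n\to\infty$ along $n$ for which the total weight is positive, $(\mathsf{D}_n^\omega,v_n)$ converges in the Benjamini--Schramm (local weak) sense to the doubly infinite path $\mathbb{Z}$ rooted at $0$: for every $k\ge0$, $\mathbb{P}(V_k(\mathsf{D}_n^\omega,v_n)\simeq V_k(\mathbb{Z},0))\to1$.
   Context: For $n\ge3$, a dissection of the convex polygon with vertices $e^{2\pi ij/n}$, $j=0,\dots,n-1$, is the plane graph consisting of the polygon's sides together with a set of diagonals that pairwise intersect at most in endpoints. Its inner faces are the bounded faces; $|F|$ is the number of edges bounding $F$. $V_k(G,v)$ denotes the subgraph induced by vertices at graph distance at most $k$ from $v$, rooted at $v$; $\simeq$ denotes isomorphism of rooted graphs. *)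

theory Defs
  imports "HOL-Analysis.Analysis"
begin

text \<open>Vertices of the n-gon are 0,...,n-1 in cyclic (counterclockwise) order.
  Edges/diagonals are encoded as ordered pairs (i,j) with i < j.\<close>

definition poly_sides :: "nat \<Rightarrow> (nat \<times> nat) set" where
  "poly_sides n = {(i, i + 1) | i. i + 1 < n} \<union> {(0, n - 1)}"

definition diagonals :: "nat \<Rightarrow> (nat \<times> nat) set" where
  "diagonals n = {(i, j). i < j \<and> j < n \<and> (i, j) \<notin> poly_sides n}"

definition crossing :: "nat \<times> nat \<Rightarrow> nat \<times> nat \<Rightarrow> bool" where
  "crossing e f = (case e of (a, b) \<Rightarrow> case f of (c, d) \<Rightarrow>
      (a < c \<and> c < b \<and> b < d) \<or> (c < a \<and> a < d \<and> d < b))"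

definition dissections :: "nat \<Rightarrow> (nat \<times> nat) set set" where
  "dissections n = {D. D \<subseteq> diagonals n \<and> (\<forall>e\<in>D. \<forall>f\<in>D. \<not> crossing e f)}"

definition edges :: "nat \<Rightarrow> (nat \<times> nat) set \<Rightarrow> (nat \<times> nat) set" where
  "edges n D = poly_sides n \<union> D"

definition adj :: "nat \<Rightarrow> (nat \<times> nat) set \<Rightarrow> nat \<Rightarrow> nat \<Rightarrow> bool" where
  "adj n D x y = (x \<noteq> y \<and> (min x y, max x y) \<in> edges n D)"

definition cyc_consec :: "nat set \<Rightarrow> nat \<Rightarrow> nat \<Rightarrow> bool" where
  "cyc_consec S x y = (x \<in> S \<and> y \<in> S \<and> x < y \<and>
      ((\<forall>z\<in>S. \<not> (x < z \<and> z < y)) \<or> (x = Min S \<and> y = Max S)))"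

text \<open>Inner faces, identified with their vertex sets: a set S of at least 3 vertices
  such that two vertices of S are joined by an edge exactly when they are cyclically
  consecutive in S (then the convex polygon spanned by S is bounded by edges and no
  edge meets its interior).\<close>
definition inner_faces :: "nat \<Rightarrow> (nat \<times> nat) set \<Rightarrow> nat set set" where
  "inner_faces n D = {S. S \<subseteq> {..<n} \<and> card S \<ge> 3 \<and>
      (\<forall>x\<in>S. \<forall>y\<in>S. x < y \<longrightarrow> ((x, y) \<in> edges n D \<longleftrightarrow> cyc_consec S x y))}"

definition dweight :: "(nat \<Rightarrow> real) \<Rightarrow> nat \<Rightarrow> (nat \<times> nat) set \<Rightarrow> real" where
  "dweight \<gamma> n D = (\<Prod>F\<in>inner_faces n D. \<gamma> (card F))"

definition total_weight :: "(nat \<Rightarrow> real) \<Rightarrow> nat \<Rightarrow> real" where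
  "total_weight \<gamma> n = (\<Sum>D\<in>dissections n. dweight \<gamma> n D)"

definition ball_set :: "nat \<Rightarrow> (nat \<times> nat) set \<Rightarrow> nat \<Rightarrow> nat \<Rightarrow> nat set" where
  "ball_set n D v k = {x. \<exists>m\<le>k. (v, x) \<in> {(a, b). adj n D a b} ^^ m}"

definition ball_is_path :: "nat \<Rightarrow> (nat \<times> nat) set \<Rightarrow> nat \<Rightarrow> nat \<Rightarrow> bool" where
  "ball_is_path n D v k = (\<exists>f. bij_betw f {-int k..int k} (ball_set n D v k) \<and> f 0 = v \<and>
      (\<forall>i\<in>{-int k..int k}. \<forall>j\<in>{-int k..int k}. adj n D (f i) (f j) \<longleftrightarrow> \<bar>i - j\<bar> = 1))"

text \<open>P(V_k(D_n^omega, v_n) ~ V_k(Z,0)) with v_n uniform on the n vertices.\<close>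
definition prob_ball_path :: "(nat \<Rightarrow> real) \<Rightarrow> nat \<Rightarrow> nat \<Rightarrow> real" where
  "prob_ball_path \<gamma> n k = (\<Sum>D\<in>dissections n.
      dweight \<gamma> n D * real (card {v\<in>{..<n}. ball_is_path n D v k}))
      / (real n * total_weight \<gamma> n)"

end

theory Submission
  imports Defs
begin

text \<open>Cutting off ears shows that the face sizes k_F \<ge> 3 of a dissection of the n-gon satisfy
  \<Sum> (k_F - 2) = n - 2, that there is one more face than diagonals, and that every multiset of
  sizes with this property is realised by some dissection. As the generating series of the
  weights has radius 0, for every H some size L + 2 has weight at least H^L. So in a dissection
  with \<delta> n diagonals, a frequent face size s \<le> s0 can be traded for a few faces of size L + 2,
  multiplying the weight by at least 32^n; since there are at most 16^n dissections (they are
  determined by their degree sequences), dissections with linearly many diagonals carry a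
  vanishing part of the total weight. Hence the density of diagonal endpoints tends to 0, and a
  uniform vertex is, with high probability, at distance more than k along the polygon from every
  diagonal endpoint, in which case its k-ball is a path.\<close>

section \<open>Dissections and their inner faces\<close>

lemma poly_sides_iff:
  "(x, y) \<in> poly_sides n \<longleftrightarrow> (x + 1 = y \<and> y < n) \<or> (x = 0 \<and> y = n - 1)"
  by (auto simp: poly_sides_def)

lemma dissectionsD:
  "D \<in> dissections n \<Longrightarrow> (x, y) \<in> D \<Longrightarrow> x < y \<and> y < n \<and> (x, y) \<notin> poly_sides n"
  by (auto simp: dissections_def diagonals_def)

lemma dissection_not_crossing:
  "D \<in> dissections n \<Longrightarrow> p \<in> D \<Longrightarrow> q \<in> D \<Longrightarrow> \<not> crossing p q"
  by (simp add: dissections_def)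

lemma dissection_subset_lessThan: "D \<in> dissections n \<Longrightarrow> D \<subseteq> {..<n} \<times> {..<n}"
  by (auto dest: dissectionsD)

lemma finite_dissection: "D \<in> dissections n \<Longrightarrow> finite D"
  using dissection_subset_lessThan finite_subset by blast

lemma finite_dissections: "finite (dissections n)"
proof -
  have "dissections n \<subseteq> Pow ({..<n} \<times> {..<n})"
    using dissection_subset_lessThan by blast
  then show ?thesis
    by (rule finite_subset) simp
qed

lemma dissection_Diff: "D \<in> dissections n \<Longrightarrow> D - A \<in> dissections n"
  by (auto simp: dissections_def)

lemma crossing_strict_mono:
  "strict_mono (f :: nat \<Rightarrow> nat) \<Longrightarrow> crossing (f p, f q) (f r, f s) = crossing (p, q) (r, s)"
  unfolding crossing_def using strict_mono_less by blast

definition endpoints :: "(nat \<times> nat) set \<Rightarrow> nat set" where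
  "endpoints D = fst ` D \<union> snd ` D"

lemma edge_at_non_endpoint:
  assumes "(x, y) \<in> edges n D" and "x \<notin> endpoints D \<or> y \<notin> endpoints D"
  shows "(x, y) \<in> poly_sides n"
  using assms by (force simp: edges_def endpoints_def)

lemma finite_inner_faces: "finite (inner_faces n D)"
  by (rule finite_subset[of _ "Pow {..<n}"]) (auto simp: inner_faces_def)

lemma inner_face_subset: "S \<in> inner_faces n D \<Longrightarrow> S \<subseteq> {..<n}"
  by (auto simp: inner_faces_def)

lemma inner_face_card: "S \<in> inner_faces n D \<Longrightarrow> card S \<ge> 3"
  by (auto simp: inner_faces_def)

lemma finite_inner_face: "S \<in> inner_faces n D \<Longrightarrow> finite S"
  by (meson inner_face_subset finite_lessThan finite_subset)

lemma inner_face_edge_iff: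
  "S \<in> inner_faces n D \<Longrightarrow> x \<in> S \<Longrightarrow> y \<in> S \<Longrightarrow> x < y \<Longrightarrow>
    (x, y) \<in> edges n D \<longleftrightarrow> cyc_consec S x y"
  by (auto simp: inner_faces_def)

lemma card_ge_3_obtains_between:
  fixes a b :: "'a :: linorder"
  assumes "finite S" "card S \<ge> 3" "S \<subseteq> {a..b}"
  obtains z where "z \<in> S" "a < z" "z < b"
proof -
  have "\<not> S \<subseteq> {a, b}"
    using card_mono[of "{a, b}" S] card_insert_le_m1[of 2 "{b}" a] assms(2) by fastforce
  then obtain z where "z \<in> S" "z \<noteq> a" "z \<noteq> b"
    by blast
  moreover have "a \<le> z" "z \<le> b"
    using assms(3) \<open>z \<in> S\<close> by auto
  ultimately have "z \<in> S" "a < z" "z < b"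
    by auto
  then show ?thesis
    by (rule that)
qed

lemma cyc_consec_atLeastAtMost:
  assumes "a \<le> x" "x < y" "y \<le> b"
  shows "cyc_consec {a..b} x y \<longleftrightarrow> y = x + 1 \<or> (x = a \<and> y = b)"
proof -
  have "Min {a..b} = a" "Max {a..b} = b"
    using assms by (auto intro: Min_eqI Max_eqI)
  moreover have "(\<forall>z\<in>{a..b}. \<not> (x < z \<and> z < y)) \<longleftrightarrow> y = x + 1"
    using assms by (auto intro: ccontr[of "y = x + 1"] elim: allE[of _ "x + 1"])
  ultimately show ?thesis
    using assms unfolding cyc_consec_def by auto
qed

lemma inner_face_succ:
  assumes F: "S \<in> inner_faces n D" and x: "x \<in> S" "x \<notin> endpoints D"
  shows "(if x + 1 < n then x + 1 else 0) \<in> S"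
proof (cases "\<exists>z\<in>S. x < z")
  case True
  define y where "y = Min {z\<in>S. x < z}"
  have fin: "finite {z\<in>S. x < z}"
    using finite_inner_face[OF F] by auto
  have y: "y \<in> S" "x < y"
    using Min_in[OF fin] True unfolding y_def by auto
  have between: "\<forall>z\<in>S. \<not> (x < z \<and> z < y)"
    using Min_le[OF fin] unfolding y_def by force
  then have "(x, y) \<in> edges n D"
    using inner_face_edge_iff[OF F x(1) y] by (simp add: cyc_consec_def x y)
  then have side: "(x + 1 = y \<and> y < n) \<or> (x = 0 \<and> y = n - 1)"
    using edge_at_non_endpoint x(2) by (simp add: poly_sides_iff)
  have "y = x + 1"
  proof (rule ccontr)
    assume "y \<noteq> x + 1"
    then have "x = 0" "y = n - 1"
      using side by auto
    moreover have "S \<subseteq> {0..n - 1}"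
      using inner_face_subset[OF F] by auto
    ultimately show False
      using card_ge_3_obtains_between[OF finite_inner_face[OF F] inner_face_card[OF F]] between
      by metis
  qed
  then show ?thesis
    using side y by auto
next
  case False
  have fin: "finite S"
    using finite_inner_face[OF F] .
  define m where "m = Min S"
  have "x = Max S"
    using False x fin by (intro Max_eqI[symmetric]) (auto simp: not_less)
  then have "S \<subseteq> {m..x}"
    using fin by (auto simp: m_def)
  then obtain z where "z \<in> S" "m < z" "z < x"
    using card_ge_3_obtains_between[OF fin inner_face_card[OF F]] by blast
  moreover have "m \<in> S"
    using Min_in[OF fin] x(1) unfolding m_def by blast
  ultimately have "cyc_consec S m x" "m < x"
    unfolding cyc_consec_def using \<open>x = Max S\<close> x(1) m_def by auto
  then have "(m, x) \<in> poly_sides n"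
    using inner_face_edge_iff[OF F \<open>m \<in> S\<close> x(1)] edge_at_non_endpoint x(2) by blast
  then have "m = 0" "x = n - 1"
    using \<open>m < z\<close> \<open>z < x\<close> by (auto simp: poly_sides_iff)
  then show ?thesis
    using \<open>m \<in> S\<close> by auto
qed

lemma inner_face_pred:
  assumes F: "S \<in> inner_faces n D" and x: "x \<in> S" "x \<notin> endpoints D"
  shows "(if 0 < x then x - 1 else n - 1) \<in> S"
proof (cases "\<exists>z\<in>S. z < x")
  case True
  define y where "y = Max {z\<in>S. z < x}"
  have fin: "finite {z\<in>S. z < x}"
    using finite_inner_face[OF F] by auto
  have "y \<in> {z\<in>S. z < x}"
    unfolding y_def by (rule Max_in[OF fin]) (use True in auto)
  then have y: "y \<in> S" "y < x"
    by auto
  have between: "\<forall>z\<in>S. \<not> (y < z \<and> z < x)"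
  proof (intro ballI notI)
    fix z assume z: "z \<in> S" "y < z \<and> z < x"
    then have "z \<le> y"
      unfolding y_def by (intro Max_ge[OF fin]) auto
    then show False
      using z by simp
  qed
  then have "(y, x) \<in> edges n D"
    using inner_face_edge_iff[OF F y(1) x(1) y(2)] by (simp add: cyc_consec_def x y)
  then have side: "(y + 1 = x \<and> x < n) \<or> (y = 0 \<and> x = n - 1)"
    using edge_at_non_endpoint x(2) by (simp add: poly_sides_iff)
  have "x = y + 1"
  proof (rule ccontr)
    assume "x \<noteq> y + 1"
    then have "y = 0" "x = n - 1"
      using side by auto
    moreover have "S \<subseteq> {0..n - 1}"
      using inner_face_subset[OF F] by auto
    ultimately show False
      using card_ge_3_obtains_between[OF finite_inner_face[OF F] inner_face_card[OF F]] between
      by metis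
  qed
  then show ?thesis
    using y by auto
next
  case False
  have fin: "finite S"
    using finite_inner_face[OF F] .
  define m where "m = Max S"
  have "x = Min S"
    using False x fin by (intro Min_eqI[symmetric]) (auto simp: not_less)
  then have "S \<subseteq> {x..m}"
    using fin by (auto simp: m_def)
  then obtain z where "z \<in> S" "x < z" "z < m"
    using card_ge_3_obtains_between[OF fin inner_face_card[OF F]] by blast
  moreover have "m \<in> S"
    using Max_in[OF fin] x(1) unfolding m_def by blast
  ultimately have "cyc_consec S x m" "x < m"
    unfolding cyc_consec_def using \<open>x = Min S\<close> x(1) m_def by auto
  then have "(x, m) \<in> poly_sides n"
    using inner_face_edge_iff[OF F x(1) \<open>m \<in> S\<close>] edge_at_non_endpoint x(2) by blast
  then have "x = 0" "m = n - 1"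
    using \<open>x < z\<close> \<open>z < m\<close> by (auto simp: poly_sides_iff)
  then show ?thesis
    using \<open>m \<in> S\<close> by auto
qed

lemma inner_face_closed_up:
  assumes F: "S \<in> inner_faces n D" and x: "x \<in> S" and t: "t < n"
    and free: "\<And>i. x \<le> i \<Longrightarrow> i < t \<Longrightarrow> i \<notin> endpoints D"
  shows "{x..t} \<subseteq> S"
proof
  fix j assume "j \<in> {x..t}"
  then show "j \<in> S"
  proof (induction j)
    case (Suc j)
    show ?case
    proof (cases "x \<le> j")
      case True
      then show ?thesis
        using inner_face_succ[OF F _ free] Suc t by (auto split: if_splits)
    qed (use Suc.prems x le_Suc_eq in auto)
  qed (use x in auto)
qed

lemma inner_face_closed_down:
  assumes F: "S \<in> inner_faces n D" and x: "x \<in> S"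
    and free: "\<And>i. t < i \<Longrightarrow> i \<le> x \<Longrightarrow> i \<notin> endpoints D"
  shows "{t..x} \<subseteq> S"
proof
  fix j assume "j \<in> {t..x}"
  then show "j \<in> S"
  proof (induction "x - j" arbitrary: j)
    case (Suc k)
    then have "j + 1 \<in> S"
      by simp
    then show ?case
      using inner_face_pred[OF F _ free, of "j + 1"] Suc.prems Suc.hyps(2) by auto
  qed (use x in auto)
qed

lemma interval_inner_face:
  assumes ab: "a + 2 \<le> b" "b < n" "(a, b) \<in> edges n D"
    and free: "\<And>i. a < i \<Longrightarrow> i < b \<Longrightarrow> i \<notin> endpoints D"
  shows "{a..b} \<in> inner_faces n D"
proof -
  have "(x, y) \<in> edges n D \<longleftrightarrow> y = x + 1 \<or> (x = a \<and> y = b)"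
    if xy: "a \<le> x" "x < y" "y \<le> b" for x y
  proof
    assume e: "(x, y) \<in> edges n D"
    show "y = x + 1 \<or> (x = a \<and> y = b)"
    proof (cases "(x, y) \<in> D")
      case True
      then have "x \<in> endpoints D" "y \<in> endpoints D"
        by (force simp: endpoints_def)+
      then have "\<not> (a < x \<and> x < b)" "\<not> (a < y \<and> y < b)"
        using free by blast+
      then show ?thesis
        using xy by auto
    next
      case False
      then show ?thesis
        using e xy ab(2) by (auto simp: edges_def poly_sides_iff)
    qed
  qed (use ab xy in \<open>auto simp: edges_def poly_sides_iff\<close>)
  then show ?thesis
    using ab by (auto simp: inner_faces_def cyc_consec_atLeastAtMost)
qed

lemma inner_faces_empty:
  assumes n: "n \<ge> 3"
  shows "inner_faces n {} = {{..<n}}"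
proof -
  have interval: "{..<n} = {0..n - 1}"
    using n by auto
  have "S = {..<n}" if F: "S \<in> inner_faces n {}" for S
  proof -
    obtain x where x: "x \<in> S"
      using inner_face_card[OF F] by fastforce
    then have "{x..n - 1} \<subseteq> S"
      using inner_face_closed_up[OF F] n by (auto simp: endpoints_def)
    moreover have "x \<le> n - 1"
      using x inner_face_subset[OF F] by auto
    ultimately have "0 \<in> S"
      using inner_face_succ[OF F, of "n - 1"] n by (auto simp: endpoints_def)
    then have "{0..n - 1} \<subseteq> S"
      using inner_face_closed_up[OF F] n by (auto simp: endpoints_def)
    then show ?thesis
      using inner_face_subset[OF F] interval by auto
  qed
  moreover have "{..<n} \<in> inner_faces n {}"
    unfolding interval using n
    by (intro interval_inner_face) (auto simp: edges_def poly_sides_iff endpoints_def)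
  ultimately show ?thesis
    by blast
qed

lemma cyc_consec_image_strict_mono:
  assumes f: "strict_mono (f :: nat \<Rightarrow> nat)" and S: "finite S" "x \<in> S" "y \<in> S"
  shows "cyc_consec (f ` S) (f x) (f y) \<longleftrightarrow> cyc_consec S x y"
proof -
  have "S \<noteq> {}"
    using S by auto
  then have Min: "Min (f ` S) = f (Min S)" and Max: "Max (f ` S) = f (Max S)"
    using mono_Min_commute[OF strict_mono_mono[OF f] S(1)]
      mono_Max_commute[OF strict_mono_mono[OF f] S(1)] by simp_all
  have eq: "f u = f v \<longleftrightarrow> u = v" and less: "f u < f v \<longleftrightarrow> u < v" for u v
    by (simp_all add: strict_mono_eq[OF f] strict_mono_less[OF f])
  have "(\<forall>z\<in>f ` S. \<not> (f x < z \<and> z < f y)) \<longleftrightarrow> (\<forall>z\<in>S. \<not> (x < z \<and> z < y))"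
    using less by auto
  then show ?thesis
    unfolding cyc_consec_def Min Max eq less using S by auto
qed

section \<open>Cutting off ears\<close>

definition ear_shift :: "nat \<Rightarrow> nat \<Rightarrow> nat \<Rightarrow> nat" where
  "ear_shift a d j = (if j \<le> a then j else j + d)"

lemma strict_mono_ear_shift: "strict_mono (ear_shift a d)"
  unfolding strict_mono_def ear_shift_def by auto

lemma ear_shift_poly_sides_iff:
  assumes "u < v" "v < n'" "a + 1 < n'" "n' \<ge> 3" "d \<ge> 1"
  shows "(ear_shift a d u, ear_shift a d v) \<in> poly_sides (n' + d) \<longleftrightarrow>
    (u, v) \<in> poly_sides n' \<and> (u, v) \<noteq> (a, a + 1)"
  using assms by (auto simp: poly_sides_iff ear_shift_def)

definition face_sizes :: "nat \<Rightarrow> (nat \<times> nat) set \<Rightarrow> nat multiset" where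
  "face_sizes n D = image_mset card (mset_set (inner_faces n D))"

lemma face_sizes_ge_3: "k \<in># face_sizes n D \<Longrightarrow> k \<ge> 3"
  by (auto simp: face_sizes_def finite_inner_faces inner_face_card)

lemma size_face_sizes: "size (face_sizes n D) = card (inner_faces n D)"
  by (simp add: face_sizes_def)

lemma dweight_face_sizes: "dweight g n D = (\<Prod>k\<in>#face_sizes n D. g k)"
  unfolding dweight_def face_sizes_def prod_unfold_prod_mset multiset.map_comp comp_def ..

text \<open>An ear is a diagonal (a, b) with no diagonal endpoint strictly between
  a and b. Cutting it off leaves a polygon with n' = n - d vertices,
  where d vertices lie strictly inside the ear; e renumbers the vertices of the
  smaller polygon into the original one (with inverse c off the ear), and the ear
  diagonal becomes the side (a, a + 1) of the smaller polygon.\<close>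

locale ear =
  fixes n :: nat and D :: "(nat \<times> nat) set" and a b :: nat
  assumes dissection: "D \<in> dissections n" and ear_in: "(a, b) \<in> D"
    and ear_free: "\<And>i. a < i \<Longrightarrow> i < b \<Longrightarrow> i \<notin> endpoints D"
begin

definition d where "d = b - a - 1"
definition n' where "n' = n - d"
abbreviation e where "e \<equiv> ear_shift a d"
definition c where "c x = (if x \<le> a then x else x - d)"
definition D' where "D' = {(u, v). (e u, e v) \<in> D \<and> (u, v) \<noteq> (a, a + 1)}"

lemma ear_bounds: "a + 2 \<le> b" "b < n" "1 \<le> d" "a + d + 1 = b" "3 \<le> n'" "a + 1 < n'" "n' + d = n"
proof -
  have "a < b" "b < n" "a + 1 \<noteq> b" "\<not> (a = 0 \<and> b = n - 1)"
    using dissectionsD[OF dissection ear_in] by (auto simp: poly_sides_iff)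
  then show "a + 2 \<le> b" "b < n" "1 \<le> d" "a + d + 1 = b" "3 \<le> n'" "a + 1 < n'" "n' + d = n"
    by (auto simp: d_def n'_def)
qed

lemma e_less_iff: "e u < e v \<longleftrightarrow> u < v"
  using strict_mono_less[OF strict_mono_ear_shift] .

lemma e_eq_iff: "e u = e v \<longleftrightarrow> u = v"
  using strict_mono_eq[OF strict_mono_ear_shift] .

lemma e_less_n_iff: "e v < n \<longleftrightarrow> v < n'"
  using ear_bounds by (auto simp: ear_shift_def)

lemma e_ear_ends: "e a = a" "e (a + 1) = b"
  using ear_bounds by (auto simp: ear_shift_def)

lemma e_c_id: "x \<le> a \<or> b \<le> x \<Longrightarrow> e (c x) = x"
  using ear_bounds by (auto simp: ear_shift_def c_def)

lemma c_less_n': "x < n \<Longrightarrow> x \<le> a \<or> b \<le> x \<Longrightarrow> c x < n'"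
  using ear_bounds by (auto simp: c_def)

lemma diagonal_outside_ear:
  assumes "(x, y) \<in> D"
  shows "(x \<le> a \<or> b \<le> x) \<and> (y \<le> a \<or> b \<le> y)"
proof -
  have "x \<in> endpoints D" "y \<in> endpoints D"
    using assms by (force simp: endpoints_def)+
  then show ?thesis
    using ear_free by (meson not_le)
qed

lemma e_in_D_iff: "(e u, e v) \<in> D \<longleftrightarrow> (u, v) \<in> D' \<or> (u, v) = (a, a + 1)"
  using e_ear_ends ear_in by (auto simp: D'_def)

lemma sides_shift_iff:
  "u < v \<Longrightarrow> v < n' \<Longrightarrow>
    (e u, e v) \<in> poly_sides n \<longleftrightarrow> (u, v) \<in> poly_sides n' \<and> (u, v) \<noteq> (a, a + 1)"
  using ear_shift_poly_sides_iff[of u v n' a d] ear_bounds by simp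

lemma edges_shift_iff:
  assumes "u < v" "v < n'"
  shows "(e u, e v) \<in> edges n D \<longleftrightarrow> (u, v) \<in> edges n' D'"
proof -
  have "(a, a + 1) \<in> poly_sides n'"
    using ear_bounds by (simp add: poly_sides_iff)
  then show ?thesis
    using sides_shift_iff[OF assms] e_in_D_iff[of u v] by (auto simp: edges_def)
qed

lemma dissection_D': "D' \<in> dissections n'"
proof -
  have "(u, v) \<in> diagonals n'" if uv: "(u, v) \<in> D'" for u v
  proof -
    have "(e u, e v) \<in> D" "(u, v) \<noteq> (a, a + 1)"
      using uv by (auto simp: D'_def)
    then have "u < v" "v < n'" "(e u, e v) \<notin> poly_sides n"
      using dissectionsD[OF dissection] e_less_iff e_less_n_iff by blast+
    then show ?thesis
      using sides_shift_iff \<open>(u, v) \<noteq> (a, a + 1)\<close> by (auto simp: diagonals_def)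
  qed
  moreover have "\<not> crossing (u, v) (x, y)" if "(u, v) \<in> D'" "(x, y) \<in> D'" for u v x y
  proof -
    have "(e u, e v) \<in> D" "(e x, e y) \<in> D"
      using that by (auto simp: D'_def)
    then have "\<not> crossing (e u, e v) (e x, e y)"
      using dissection by (auto simp: dissections_def)
    then show ?thesis
      using crossing_strict_mono[OF strict_mono_ear_shift] by simp
  qed
  ultimately show ?thesis
    by (auto simp: dissections_def)
qed

lemma bij_betw_D': "bij_betw (map_prod e e) D' (D - {(a, b)})"
proof (rule bij_betw_imageI)
  show "inj_on (map_prod e e) D'"
    by (auto intro!: inj_onI simp: e_eq_iff)
  show "map_prod e e ` D' = D - {(a, b)}"
  proof
    show "map_prod e e ` D' \<subseteq> D - {(a, b)}"
    proof
      fix p assume "p \<in> map_prod e e ` D'"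
      then obtain u v where uv: "p = (e u, e v)" "(e u, e v) \<in> D" "(u, v) \<noteq> (a, a + 1)"
        by (auto simp: D'_def)
      then have "p \<noteq> (e a, e (a + 1))"
        by (simp add: e_eq_iff)
      then show "p \<in> D - {(a, b)}"
        using uv e_ear_ends by simp
    qed
  next
    show "D - {(a, b)} \<subseteq> map_prod e e ` D'"
    proof
      fix p assume p: "p \<in> D - {(a, b)}"
      then obtain x y where xy: "p = (x, y)" "e (c x) = x" "e (c y) = y"
        using diagonal_outside_ear e_c_id by (cases p) auto
      then have "(c x, c y) \<in> D'"
        using p e_ear_ends by (auto simp: D'_def)
      then show "p \<in> map_prod e e ` D'"
        using xy by force
    qed
  qed
qed

lemma card_D': "card D' = card D - 1"
  using bij_betw_same_card[OF bij_betw_D'] ear_in finite_dissection[OF dissection] by simp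

lemma inj_e: "inj e"
  by (rule injI) (simp add: e_eq_iff)

lemma card_image_e: "card (e ` F) = card F"
  using card_image inj_on_subset[OF inj_e] by blast

lemma inner_face_shift_iff:
  assumes S: "S \<subseteq> {..<n'}"
  shows "e ` S \<in> inner_faces n D \<longleftrightarrow> S \<in> inner_faces n' D'"
proof -
  have fin: "finite S"
    using S finite_subset by blast
  have "e ` S \<subseteq> {..<n}"
    using S e_less_n_iff by auto
  moreover have "card (e ` S) = card S"
    by (rule card_image_e)
  moreover have "(\<forall>x\<in>e ` S. \<forall>y\<in>e ` S. x < y \<longrightarrow> ((x, y) \<in> edges n D \<longleftrightarrow> cyc_consec (e ` S) x y))
      \<longleftrightarrow> (\<forall>x\<in>S. \<forall>y\<in>S. x < y \<longrightarrow> ((x, y) \<in> edges n' D' \<longleftrightarrow> cyc_consec S x y))"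
  proof -
    have "((e x, e y) \<in> edges n D \<longleftrightarrow> cyc_consec (e ` S) (e x) (e y)) \<longleftrightarrow>
        ((x, y) \<in> edges n' D' \<longleftrightarrow> cyc_consec S x y)" if "x \<in> S" "y \<in> S" "x < y" for x y
      using edges_shift_iff cyc_consec_image_strict_mono[OF strict_mono_ear_shift fin] S that by auto
    then show ?thesis
      using e_less_iff by auto
  qed
  ultimately show ?thesis
    using S by (simp add: inner_faces_def)
qed

lemma ear_inner_face: "{a..b} \<in> inner_faces n D"
  using interval_inner_face ear_bounds ear_in ear_free by (simp add: edges_def)

lemma inner_faces_ear: "inner_faces n D = insert {a..b} ((`) e ` inner_faces n' D')"
proof
  show "inner_faces n D \<subseteq> insert {a..b} ((`) e ` inner_faces n' D')"
  proof
    fix S assume F: "S \<in> inner_faces n D"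
    show "S \<in> insert {a..b} ((`) e ` inner_faces n' D')"
    proof (cases "\<exists>x\<in>S. a < x \<and> x < b")
      case True
      then obtain x where x: "x \<in> S" "a < x" "x < b"
        by auto
      have "{x..b} \<subseteq> S" "{a..x} \<subseteq> S"
        using inner_face_closed_up[OF F x(1), of b] inner_face_closed_down[OF F x(1), of a]
          ear_free x ear_bounds by auto
      moreover have "{a..b} = {a..x} \<union> {x..b}"
        using x by auto
      ultimately have sub: "{a..b} \<subseteq> S"
        by auto
      then have "a \<in> S" "b \<in> S"
        using ear_bounds by auto
      moreover have "(a, b) \<in> edges n D"
        using ear_in by (simp add: edges_def)
      ultimately have "cyc_consec S a b"
        using inner_face_edge_iff[OF F] ear_bounds by simp
      then have "a = Min S" "b = Max S"
        using x unfolding cyc_consec_def by auto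
      then have "S \<subseteq> {a..b}"
        using finite_inner_face[OF F] by auto
      then show ?thesis
        using sub by auto
    next
      case False
      then have outside: "x \<le> a \<or> b \<le> x" "x < n" if "x \<in> S" for x
        using that inner_face_subset[OF F] by force+
      have "(\<lambda>x. e (c x)) ` S = id ` S"
        using outside e_c_id by (intro image_cong) auto
      then have S: "e ` c ` S = S"
        by (simp add: image_image)
      have "c ` S \<subseteq> {..<n'}"
        using outside c_less_n' by auto
      then have "c ` S \<in> inner_faces n' D'"
        using inner_face_shift_iff[OF \<open>c ` S \<subseteq> {..<n'}\<close>] S F by simp
      then have "e ` c ` S \<in> (`) e ` inner_faces n' D'"
        by (rule imageI)
      then show ?thesis
        using S by simp
    qed
  qed
  show "insert {a..b} ((`) e ` inner_faces n' D') \<subseteq> inner_faces n D"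
  proof
    fix S assume "S \<in> insert {a..b} ((`) e ` inner_faces n' D')"
    then consider "S = {a..b}" | S' where "S = e ` S'" "S' \<in> inner_faces n' D'"
      by blast
    then show "S \<in> inner_faces n D"
    proof cases
      case (2 S')
      then show ?thesis
        using inner_face_shift_iff[OF inner_face_subset[OF 2(2)]] by simp
    qed (simp add: ear_inner_face)
  qed
qed

lemma ear_not_shifted_face: "{a..b} \<notin> (`) e ` inner_faces n' D'"
proof
  assume "{a..b} \<in> (`) e ` inner_faces n' D'"
  moreover have "a + 1 \<in> {a..b}"
    using ear_bounds by simp
  ultimately obtain u where "e u = a + 1"
    by (metis imageE)
  then show False
    using ear_bounds(3) by (simp add: ear_shift_def split: if_splits)
qed

lemma inj_on_image_e: "inj_on ((`) e) X"
  by (rule inj_onI) (simp add: inj_image_eq_iff[OF inj_e])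

lemma finite_shifted_faces: "finite ((`) e ` inner_faces n' D')"
  using finite_inner_faces by blast

lemma card_inner_faces_ear: "card (inner_faces n D) = card (inner_faces n' D') + 1"
  using card_insert_disjoint[OF finite_shifted_faces ear_not_shifted_face]
    card_image[OF inj_on_image_e] unfolding inner_faces_ear by simp

lemma face_sizes_ear: "face_sizes n D = add_mset (d + 2) (face_sizes n' D')"
proof -
  have "mset_set (inner_faces n D) = add_mset {a..b} (image_mset ((`) e) (mset_set (inner_faces n' D')))"
    unfolding inner_faces_ear mset_set.insert[OF finite_shifted_faces ear_not_shifted_face]
      image_mset_mset_set[OF inj_on_image_e] ..
  then have "face_sizes n D =
      add_mset (card {a..b}) (image_mset (card \<circ> (`) e) (mset_set (inner_faces n' D')))"
    unfolding face_sizes_def by (simp add: multiset.map_comp)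
  also have "card {a..b} = d + 2"
    using ear_bounds(4) by simp
  also have "image_mset (card \<circ> (`) e) (mset_set (inner_faces n' D')) = face_sizes n' D'"
    unfolding face_sizes_def by (rule image_mset_cong) (simp add: card_image_e)
  finally show ?thesis .
qed

end

text \<open>A shortest diagonal is an ear.\<close>

lemma obtain_ear:
  assumes D: "D \<in> dissections n" and ne: "D \<noteq> {}"
  obtains a b where "(a, b) \<in> D" "\<And>i. a < i \<Longrightarrow> i < b \<Longrightarrow> i \<notin> endpoints D"
proof -
  obtain q where "q \<in> D"
    using ne by blast
  then obtain a b where ab: "(a, b) \<in> D" and shortest: "\<forall>p\<in>D. b - a \<le> snd p - fst p"
    using ex_has_least_nat[of "\<lambda>p. p \<in> D" q "\<lambda>p. snd p - fst p"] by fastforce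
  have "i \<notin> endpoints D" if i: "a < i" "i < b" for i
  proof
    assume "i \<in> endpoints D"
    then obtain x y where xy: "(x, y) \<in> D" "i = x \<or> i = y"
      by (force simp: endpoints_def)
    have nc: "\<not> crossing (a, b) (x, y)" "\<not> crossing (x, y) (a, b)"
      using dissection_not_crossing[OF D] ab xy(1) by blast+
    have "y - x < b - a"
    proof (cases "i = x")
      case True
      then have "y \<le> b"
        using nc(1) i unfolding crossing_def by auto
      then show ?thesis
        using True i by linarith
    next
      case False
      then have "i = y" "a \<le> x"
        using xy(2) nc(2) i unfolding crossing_def by auto
      then show ?thesis
        using i by linarith
    qed
    then show False
      using shortest xy(1) by fastforce
  qed
  then show ?thesis
    using that ab by blast
qed

lemma dissection_ear_induct [consumes 2, case_names empty ear]:
  assumes "D \<in> dissections n" "n \<ge> 3"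
    and empty: "\<And>n. n \<ge> 3 \<Longrightarrow> P n {}"
    and ear: "\<And>n D a b. ear n D a b \<Longrightarrow> P (ear.n' n a b) (ear.D' D a b) \<Longrightarrow> P n D"
  shows "P n D"
  using assms(1,2)
proof (induction "card D" arbitrary: n D)
  case 0
  then show ?case
    using empty finite_dissection by auto
next
  case (Suc m)
  then obtain a b where "(a, b) \<in> D" "\<And>i. a < i \<Longrightarrow> i < b \<Longrightarrow> i \<notin> endpoints D"
    using obtain_ear by (metis card.empty nat.distinct(1))
  then interpret E: ear n D a b
    using Suc.prems by unfold_locales
  have "m = card E.D'"
    using E.card_D' Suc.hyps(2) by simp
  then have "P E.n' E.D'"
    using Suc.hyps(1) E.dissection_D' E.ear_bounds(5) by blast
  then show ?case
    using ear[OF E.ear_axioms] by blast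
qed

lemma card_inner_faces:
  "D \<in> dissections n \<Longrightarrow> n \<ge> 3 \<Longrightarrow> card (inner_faces n D) = card D + 1"
proof (induction rule: dissection_ear_induct)
  case (ear n D a b)
  interpret ear n D a b
    by (rule ear(1))
  have "card D \<noteq> 0"
    using ear_in finite_dissection[OF dissection] by auto
  then show ?case
    using ear(2) card_inner_faces_ear card_D' by simp
qed (simp add: inner_faces_empty)

lemma sum_face_sizes:
  "D \<in> dissections n \<Longrightarrow> n \<ge> 3 \<Longrightarrow> (\<Sum>k\<in>#face_sizes n D. k - 2) = n - 2"
proof (induction rule: dissection_ear_induct)
  case (ear n D a b)
  interpret ear n D a b
    by (rule ear(1))
  show ?case
    using ear(2) face_sizes_ear ear_bounds(5,7) by simp
qed (simp add: face_sizes_def inner_faces_empty)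

lemma card_dissection_le:
  assumes "D \<in> dissections n" "n \<ge> 3"
  shows "card D + 3 \<le> n"
proof -
  have "card D + 1 = size (face_sizes n D)"
    using card_inner_faces[OF assms] size_face_sizes by simp
  also have "\<dots> = (\<Sum>k\<in>#face_sizes n D. 1)"
    by (rule size_eq_sum_mset)
  also have "\<dots> \<le> (\<Sum>k\<in>#face_sizes n D. k - 2)"
    using face_sizes_ge_3 by (intro sum_mset_mono) fastforce
  also have "\<dots> = n - 2"
    by (rule sum_face_sizes[OF assms])
  finally show ?thesis
    using assms(2) by linarith
qed

section \<open>Attaching ears: realising face sizes\<close>

lemma not_crossing_outside:
  assumes "\<not> (a < x \<and> x < b)" "\<not> (a < y \<and> y < b)"
  shows "\<not> crossing (a, b) (x, y)" "\<not> crossing (x, y) (a, b)"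
  using assms by (auto simp: crossing_def)

definition attach_ear :: "nat \<Rightarrow> (nat \<times> nat) set \<Rightarrow> (nat \<times> nat) set" where
  "attach_ear d D = insert (0, d + 1) (map_prod (ear_shift 0 d) (ear_shift 0 d) ` D)"

lemma attach_ear_dissection:
  assumes D: "D \<in> dissections n" and n: "n \<ge> 3" and k: "k \<ge> 1"
  shows "attach_ear k D \<in> dissections (n + k)"
proof -
  let ?e = "ear_shift 0 k"
  have outside: "\<not> (0 < ?e u \<and> ?e u < k + 1)" for u
    by (auto simp: ear_shift_def)
  have "(?e u, ?e v) \<in> diagonals (n + k)" if "(u, v) \<in> D" for u v
  proof -
    have "u < v" "v < n" "(u, v) \<notin> poly_sides n"
      using dissectionsD[OF D that] by auto
    then show ?thesis
      using ear_shift_poly_sides_iff[of u v n 0 k] n k strict_mono_less[OF strict_mono_ear_shift]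
      by (auto simp: diagonals_def ear_shift_def)
  qed
  moreover have "(0, k + 1) \<in> diagonals (n + k)"
    using n k by (auto simp: diagonals_def poly_sides_iff)
  ultimately have "attach_ear k D \<subseteq> diagonals (n + k)"
    by (auto simp: attach_ear_def)
  moreover have "\<not> crossing p q" if "p \<in> attach_ear k D" "q \<in> attach_ear k D" for p q
  proof -
    have shape: "p = (0, k + 1) \<or> (\<exists>u v. (u, v) \<in> D \<and> p = (?e u, ?e v))"
      if "p \<in> attach_ear k D" for p
      using that by (auto simp: attach_ear_def)
    have "\<not> crossing (?e u, ?e v) (?e x, ?e y)" if "(u, v) \<in> D" "(x, y) \<in> D" for u v x y
      using dissection_not_crossing[OF D that]
      by (simp add: crossing_strict_mono[OF strict_mono_ear_shift])
    moreover have "\<not> crossing (0, k + 1) (?e u, ?e v)" "\<not> crossing (?e u, ?e v) (0, k + 1)" for u v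
      using not_crossing_outside[OF outside outside] by simp_all
    moreover have "\<not> crossing (0, k + 1) (0, k + 1)"
      by (simp add: crossing_def)
    ultimately show ?thesis
      using shape[OF that(1)] shape[OF that(2)] by (elim disjE exE conjE) simp_all
  qed
  ultimately show ?thesis
    unfolding dissections_def by blast
qed

lemma ear_attach_ear:
  assumes D: "D \<in> dissections n" and n: "n \<ge> 3" and k: "k \<ge> 1"
  shows "ear (n + k) (attach_ear k D) 0 (k + 1)"
proof
  show "attach_ear k D \<in> dissections (n + k)"
    using attach_ear_dissection[OF assms] .
  show "(0, k + 1) \<in> attach_ear k D"
    by (simp add: attach_ear_def)
  show "i \<notin> endpoints (attach_ear k D)" if "0 < i" "i < k + 1" for i
    using that by (auto simp: endpoints_def attach_ear_def ear_shift_def split: if_splits)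
qed

lemma face_sizes_attach_ear:
  assumes D: "D \<in> dissections n" and n: "n \<ge> 3" and k: "k \<ge> 1"
  shows "face_sizes (n + k) (attach_ear k D) = add_mset (k + 2) (face_sizes n D)"
proof -
  \<comment> \<open>Interpreted at Suc k, the simp normal form of k + 1, so that simplified terms still
    match the locale constants.\<close>
  interpret ear "n + k" "attach_ear k D" 0 "Suc k"
    using ear_attach_ear[OF assms] by simp
  have "d = k"
    unfolding d_def by simp
  then have "n' = n"
    unfolding n'_def by simp
  have "(0, 1) \<notin> D"
    using dissectionsD[OF D] n by (auto simp: poly_sides_iff)
  moreover have "(e u, e v) \<in> attach_ear k D \<longleftrightarrow> (u, v) = (0, 1) \<or> (u, v) \<in> D" for u v
  proof -
    have e: "e = ear_shift 0 k"
      using \<open>d = k\<close> by simp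
    have "(e u, e v) = (0, k + 1) \<longleftrightarrow> (u, v) = (0, 1)"
      using k unfolding e by (auto simp: ear_shift_def)
    moreover have "(e u, e v) \<in> map_prod e e ` D \<longleftrightarrow> (u, v) \<in> D"
      by (auto simp: e_eq_iff)
    ultimately show ?thesis
      unfolding attach_ear_def e[symmetric] by auto
  qed
  ultimately have "D' = D"
    unfolding D'_def by auto
  then show ?thesis
    using face_sizes_ear \<open>n' = n\<close> \<open>d = k\<close> by simp
qed

lemma face_sizes_realizable:
  assumes "\<forall>k\<in>#M. k \<ge> 3" "M \<noteq> {#}" "(\<Sum>k\<in>#M. k - 2) + 2 = n"
  shows "\<exists>D\<in>dissections n. face_sizes n D = M"
  using assms
proof (induction M arbitrary: n)
  case (add s M)
  show ?case
  proof (cases "M = {#}")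
    case True
    then have "face_sizes n {} = add_mset s M"
      using add.prems by (simp add: face_sizes_def inner_faces_empty)
    then show ?thesis
      by (auto simp: dissections_def)
  next
    case False
    define n' where "n' = (\<Sum>k\<in>#M. k - 2) + 2"
    obtain k where "k \<in># M"
      using False by blast
    then have "k - 2 \<le> (\<Sum>k\<in>#M. k - 2)" "k \<ge> 3"
      using add.prems by (auto dest: multi_member_split)
    then have "n' \<ge> 3"
      by (simp add: n'_def)
    obtain D where D: "D \<in> dissections n'" "face_sizes n' D = M"
      using add.IH[of n'] add.prems False n'_def by auto
    have "s \<ge> 3" "n = (s - 2) + n'"
      using add.prems(1,3) by (simp_all add: n'_def)
    then have "s - 2 \<ge> 1" and sizes: "s - 2 + 2 = s" "n' + (s - 2) = n"
      by linarith+
    have "attach_ear (s - 2) D \<in> dissections (n' + (s - 2))"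
      by (rule attach_ear_dissection[OF D(1) \<open>n' \<ge> 3\<close> \<open>s - 2 \<ge> 1\<close>])
    moreover have "face_sizes (n' + (s - 2)) (attach_ear (s - 2) D) = add_mset (s - 2 + 2) M"
      using face_sizes_attach_ear[OF D(1) \<open>n' \<ge> 3\<close> \<open>s - 2 \<ge> 1\<close>] D(2) by simp
    ultimately show ?thesis
      unfolding sizes by blast
  qed
qed simp

section \<open>Counting dissections\<close>

definition out_degree :: "(nat \<times> nat) set \<Rightarrow> nat \<Rightarrow> nat" where
  "out_degree D v = card {y. (v, y) \<in> D}"

definition in_degree :: "(nat \<times> nat) set \<Rightarrow> nat \<Rightarrow> nat" where
  "in_degree D v = out_degree (converse D) v"

lemma finite_successors: "finite D \<Longrightarrow> finite {y. (v, y) \<in> D}"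
  by (rule finite_subset[of _ "snd ` D"]) force+

lemma out_degree_pos_iff: "finite D \<Longrightarrow> 0 < out_degree D v \<longleftrightarrow> (\<exists>y. (v, y) \<in> D)"
  by (auto simp: out_degree_def card_gt_0_iff finite_successors)

lemma in_degree_pos_iff: "finite D \<Longrightarrow> 0 < in_degree D v \<longleftrightarrow> (\<exists>x. (x, v) \<in> D)"
  by (simp add: in_degree_def out_degree_pos_iff)

lemma out_degree_Diff:
  assumes "finite D" "(a, b) \<in> D"
  shows "out_degree (D - {(a, b)}) v = (if v = a then out_degree D v - 1 else out_degree D v)"
proof -
  have "{y. (v, y) \<in> D - {(a, b)}} = (if v = a then {y. (v, y) \<in> D} - {b} else {y. (v, y) \<in> D})"
    by auto
  then show ?thesis
    using assms finite_successors by (simp add: out_degree_def)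
qed

lemma in_degree_Diff:
  assumes "finite D" "(a, b) \<in> D"
  shows "in_degree (D - {(a, b)}) v = (if v = b then in_degree D v - 1 else in_degree D v)"
proof -
  have "converse (D - {(a, b)}) = converse D - {(b, a)}"
    by auto
  then show ?thesis
    using out_degree_Diff[of "converse D" b a] assms by (simp add: in_degree_def)
qed

lemma card_converse: "card (converse D) = card D"
proof -
  have "converse D = prod.swap ` D"
    by force
  then show ?thesis
    by (simp add: card_image)
qed

lemma sum_out_degree:
  assumes "finite D" "fst ` D \<subseteq> A" "finite A"
  shows "(\<Sum>v\<in>A. out_degree D v) = card D"
proof -
  have "D = Sigma A (\<lambda>v. {y. (v, y) \<in> D})"
    using assms(2) by force
  then have "card D = card (Sigma A (\<lambda>v. {y. (v, y) \<in> D}))"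
    by (rule arg_cong)
  also have "\<dots> = (\<Sum>v\<in>A. out_degree D v)"
    unfolding out_degree_def
    by (rule card_SigmaI[OF assms(3)]) (simp add: finite_successors[OF assms(1)])
  finally show ?thesis
    by simp
qed

lemma sum_in_degree:
  assumes "finite D" "snd ` D \<subseteq> A" "finite A"
  shows "(\<Sum>v\<in>A. in_degree D v) = card D"
  using sum_out_degree[of "converse D" A] assms card_converse by (force simp: in_degree_def)

text \<open>The first diagonal is determined by the degree sequences alone; removing it
  inductively shows that the degree sequences determine the dissection.\<close>

definition first_diagonal :: "(nat \<times> nat) set \<Rightarrow> nat \<times> nat" where
  "first_diagonal D = (let b = LEAST v. 0 < in_degree D v in
     (Max {v. v < b \<and> 0 < out_degree D v}, b))"

lemma first_diagonal_in:
  assumes D: "D \<in> dissections n" and ne: "D \<noteq> {}"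
  shows "first_diagonal D \<in> D"
proof -
  have fin: "finite D"
    using finite_dissection[OF D] .
  define b where "b = (LEAST v. 0 < in_degree D v)"
  obtain x y where "(x, y) \<in> D"
    using ne by auto
  then have "0 < in_degree D y"
    using in_degree_pos_iff[OF fin] by blast
  then have "0 < in_degree D b"
    unfolding b_def by (rule LeastI)
  then obtain a0 where a0: "(a0, b) \<in> D"
    using in_degree_pos_iff[OF fin] by auto
  have b_least: "b \<le> v" if "0 < in_degree D v" for v
    unfolding b_def using that by (rule Least_le)
  define A where "A = {v. v < b \<and> 0 < out_degree D v}"
  have "a0 \<in> A"
    using a0 dissectionsD[OF D a0] out_degree_pos_iff[OF fin] by (auto simp: A_def)
  moreover have "finite A"
    by (auto simp: A_def)
  ultimately have a: "Max A \<in> A" "a0 \<le> Max A"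
    using Max_in Max_ge by blast+
  then obtain j where j: "(Max A, j) \<in> D"
    using out_degree_pos_iff[OF fin] by (auto simp: A_def)
  have "(Max A, b) \<in> D"
  proof (cases "a0 = Max A")
    case False
    have "b \<le> j"
      using j b_least in_degree_pos_iff[OF fin] by blast
    moreover have "\<not> crossing (a0, b) (Max A, j)"
      using dissection_not_crossing[OF D a0 j] .
    ultimately have "j = b"
      using a False by (auto simp: A_def crossing_def)
    then show ?thesis
      using j by simp
  qed (use a0 in simp)
  then show ?thesis
    by (simp add: first_diagonal_def Let_def b_def A_def)
qed

lemma dissection_eq_if_degrees_eq:
  assumes "D1 \<in> dissections n" "D2 \<in> dissections n"
    and "out_degree D1 = out_degree D2" "in_degree D1 = in_degree D2"
  shows "D1 = D2"
  using assms
proof (induction "card D1" arbitrary: D1 D2)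
  case 0
  then have "D1 = {}"
    using finite_dissection by auto
  then have "out_degree D2 v = out_degree {} v" for v
    using "0.prems"(3) by simp
  then have "out_degree D2 v = 0" for v
    by (simp add: out_degree_def)
  then have "D2 = {}"
    using out_degree_pos_iff[OF finite_dissection[OF "0.prems"(2)]] by fastforce
  then show ?case
    using \<open>D1 = {}\<close> by simp
next
  case (Suc m)
  have fin: "finite D1" "finite D2"
    using finite_dissection Suc.prems by auto
  have "D1 \<noteq> {}"
    using Suc.hyps(2) by auto
  then obtain x y where "(x, y) \<in> D1"
    by auto
  then have "D2 \<noteq> {}"
    using out_degree_pos_iff fin Suc.prems(3) by (metis empty_iff)
  define p where "p = first_diagonal D1"
  have same: "first_diagonal D2 = p"
    using Suc.prems(3,4) by (simp add: p_def first_diagonal_def)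
  have p: "p \<in> D1" "p \<in> D2"
    using first_diagonal_in Suc.prems(1,2) \<open>D1 \<noteq> {}\<close> \<open>D2 \<noteq> {}\<close> same p_def by metis+
  have "out_degree (D1 - {p}) = out_degree (D2 - {p})" "in_degree (D1 - {p}) = in_degree (D2 - {p})"
    using out_degree_Diff[OF fin(1)] out_degree_Diff[OF fin(2)] in_degree_Diff[OF fin(1)]
      in_degree_Diff[OF fin(2)] p Suc.prems(3,4) by (cases p; auto)+
  moreover have "m = card (D1 - {p})"
    using Suc.hyps(2) p fin by simp
  ultimately have "D1 - {p} = D2 - {p}"
    using Suc.hyps(1) dissection_Diff Suc.prems(1,2) by blast
  then show ?case
    using p by blast
qed

lemma finite_bounded_sum_lists: "finite {xs :: nat list. length xs = k \<and> sum_list xs \<le> m}"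
proof (rule finite_subset)
  show "{xs :: nat list. length xs = k \<and> sum_list xs \<le> m} \<subseteq> {xs. set xs \<subseteq> {..m} \<and> length xs = k}"
    using member_le_sum_list by fastforce
qed (rule finite_lists_length_eq, simp)

text \<open>A list with positive sum bound is either a 0 followed by a shorter list, or arises from
  a list of smaller sum by incrementing its head.\<close>

lemma card_bounded_sum_lists_le: "card {xs :: nat list. length xs = k \<and> sum_list xs \<le> m} \<le> 2 ^ (k + m)"
proof (induction "k + m" arbitrary: k m rule: less_induct)
  case less
  define L where "L = (\<lambda>k m. {xs :: nat list. length xs = k \<and> sum_list xs \<le> m})"
  define inc where "inc = (\<lambda>xs :: nat list. (hd xs + 1) # tl xs)"
  show ?case
  proof (cases "m = 0")
    case True
    then have "L k m \<subseteq> {replicate k (0::nat)}"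
      by (auto simp: L_def intro: replicate_eqI)
    then have "card (L k m) \<le> card {replicate k (0::nat)}"
      by (rule card_mono[rotated]) simp
    also have "\<dots> \<le> 2 ^ (k + m)"
      by simp
    finally show ?thesis
      by (simp add: L_def)
  next
    case False
    show ?thesis
    proof (cases k)
      case 0
      then have "L k m = {[]}"
        by (auto simp: L_def)
      then show ?thesis
        by (simp add: L_def)
    next
      case (Suc k')
      have "L k m \<subseteq> Cons 0 ` L k' m \<union> inc ` L k (m - 1)"
      proof
        fix xs assume xs: "xs \<in> L k m"
        then obtain x ys where xys: "xs = x # ys" "length ys = k'"
          using Suc by (cases xs) (auto simp: L_def)
        show "xs \<in> Cons 0 ` L k' m \<union> inc ` L k (m - 1)"
        proof (cases x)
          case (Suc x')
          then have "x' # ys \<in> L k (m - 1)" "xs = inc (x' # ys)"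
            using xs xys \<open>k = Suc k'\<close> by (auto simp: L_def inc_def)
          then show ?thesis
            by blast
        qed (use xs xys in \<open>auto simp: L_def\<close>)
      qed
      moreover have fin: "finite (L k' m)" "finite (L k (m - 1))"
        unfolding L_def by (rule finite_bounded_sum_lists)+
      ultimately have "card (L k m) \<le> card (Cons 0 ` L k' m \<union> inc ` L k (m - 1))"
        by (intro card_mono) auto
      also have "\<dots> \<le> card (Cons 0 ` L k' m) + card (inc ` L k (m - 1))"
        by (rule card_Un_le)
      also have "\<dots> \<le> card (L k' m) + card (L k (m - 1))"
        by (intro add_mono card_image_le fin)
      also have "\<dots> \<le> 2 ^ (k' + m) + 2 ^ (k + (m - 1))"
        using less[of k' m] less[of k "m - 1"] Suc False unfolding L_def by simp
      also have "\<dots> = 2 ^ (k + m)"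
        using Suc False by (cases m) simp_all
      finally show ?thesis
        by (simp add: L_def)
    qed
  qed
qed

lemma card_dissections_le:
  assumes n: "n \<ge> 3"
  shows "card (dissections n) \<le> 16 ^ n"
proof -
  define L where "L = {xs :: nat list. length xs = n \<and> sum_list xs \<le> n}"
  define degrees where "degrees = (\<lambda>D. (map (out_degree D) [0..<n], map (in_degree D) [0..<n]))"
  have beyond: "out_degree D v = 0 \<and> in_degree D v = 0" if "D \<in> dissections n" "v \<ge> n" for D v
  proof -
    have "{y. (v, y) \<in> D} = {}" "{y. (v, y) \<in> converse D} = {}"
      using dissectionsD[OF that(1)] that(2) by fastforce+
    then show ?thesis
      by (simp add: out_degree_def in_degree_def)
  qed
  have "inj_on degrees (dissections n)"
  proof (rule inj_onI)
    fix D1 D2 assume D: "D1 \<in> dissections n" "D2 \<in> dissections n" and "degrees D1 = degrees D2"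
    then have "out_degree D1 v = out_degree D2 v \<and> in_degree D1 v = in_degree D2 v" for v
      using beyond[OF D(1)] beyond[OF D(2)] by (cases "v < n") (auto simp: degrees_def)
    then show "D1 = D2"
      using dissection_eq_if_degrees_eq[OF D] by auto
  qed
  moreover have "degrees ` dissections n \<subseteq> L \<times> L"
  proof
    fix p assume "p \<in> degrees ` dissections n"
    then obtain D where D: "D \<in> dissections n" "p = degrees D"
      by auto
    have sub: "fst ` D \<subseteq> {..<n}" "snd ` D \<subseteq> {..<n}"
      using dissection_subset_lessThan[OF D(1)] by auto
    have "sum_list (map f [0..<n]) = (\<Sum>v<n. f v)" for f :: "nat \<Rightarrow> nat"
      by (simp add: sum_list_sum_nth atLeast0LessThan)
    then show "p \<in> L \<times> L"
      using D sum_out_degree[OF _ sub(1)] sum_in_degree[OF _ sub(2)] finite_dissection[OF D(1)]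
        card_dissection_le[OF D(1) n] by (auto simp: L_def degrees_def)
  qed
  ultimately have "card (dissections n) \<le> card (L \<times> L)"
    using card_inj_on_le finite_bounded_sum_lists by (metis L_def finite_SigmaI)
  also have "\<dots> \<le> 2 ^ (n + n) * 2 ^ (n + n)"
    using card_bounded_sum_lists_le[of n n] by (simp add: L_def card_cartesian_product mult_le_mono)
  also have "\<dots> = 16 ^ n"
    by (simp add: power_add flip: power_mult_distrib)
  finally show ?thesis .
qed

section \<open>Weights of type III\<close>

lemma conv_radius_eq_0_imp_large_coeff:
  fixes f :: "nat \<Rightarrow> 'a :: {banach, real_normed_div_algebra}"
  assumes "conv_radius f = 0" "H > 0"
  shows "\<exists>k. norm (f k) > H ^ k"
proof (rule ccontr)
  assume "\<not> ?thesis"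
  then have small: "norm (f k) \<le> H ^ k" for k
    by (simp add: not_less)
  define z :: 'a where "z = of_real (1 / (2 * H))"
  have norm_z: "norm z = 1 / (2 * H)"
    unfolding z_def norm_of_real using assms(2) by simp
  have "norm (f k * z ^ k) \<le> (1 / 2) ^ k" for k
  proof -
    have "norm (f k * z ^ k) = norm (f k) * (1 / (2 * H)) ^ k"
      by (simp only: norm_mult norm_power norm_z)
    also have "\<dots> \<le> H ^ k * (1 / (2 * H)) ^ k"
      using small assms(2) by (simp add: mult_right_mono)
    also have "\<dots> = (1 / 2) ^ k"
      using assms(2) by (simp flip: power_mult_distrib)
    finally show ?thesis .
  qed
  then have "summable (\<lambda>k. f k * z ^ k)"
    by (intro summable_comparison_test'[OF summable_geometric[of "1 / 2"]]) auto
  then have "norm z \<le> conv_radius f"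
    by (rule conv_radius_geI)
  then show False
    using assms norm_z by simp
qed

lemma type_III_large_weight:
  fixes \<gamma> :: "nat \<Rightarrow> real"
  assumes nonneg: "\<And>k. k \<ge> 3 \<Longrightarrow> \<gamma> k \<ge> 0"
    and typeIII: "conv_radius (\<lambda>k. if k \<ge> 1 then \<gamma> (k + 2) else 0) = 0" and H: "H \<ge> 1"
  shows "\<exists>L\<ge>1. \<gamma> (L + 2) \<ge> H ^ L"
proof -
  obtain k where k: "norm (if k \<ge> 1 then \<gamma> (k + 2) else 0) > H ^ k"
    using conv_radius_eq_0_imp_large_coeff[OF typeIII] H by force
  then have "k \<ge> 1"
    using H by (cases "k = 0") auto
  then show ?thesis
    using k nonneg[of "k + 2"] by (intro exI[of _ k]) auto
qed

text \<open>Few faces have size above s0, since sizes minus 2 add up to at most n; so if there are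
  many faces, one size in 3..s0 is frequent.\<close>

lemma exists_frequent_small_size:
  fixes M :: "nat multiset" and \<delta> :: real
  assumes ge3: "\<forall>k\<in>#M. k \<ge> 3" and sum: "(\<Sum>k\<in>#M. k - 2) \<le> n"
    and size: "real (size M) \<ge> \<delta> * n" and \<delta>: "\<delta> > 0"
    and s0: "s0 \<ge> 3" "real (s0 - 2) \<ge> 2 / \<delta>"
  shows "\<exists>s. 3 \<le> s \<and> s \<le> s0 \<and> real (count M s) \<ge> \<delta> * n / (2 * (s0 - 2))"
proof (rule ccontr)
  assume "\<not> ?thesis"
  then have rare: "real (count M s) < \<delta> * n / (2 * (s0 - 2))" if "3 \<le> s" "s \<le> s0" for s
    using that by force
  define T where "T = filter_mset (\<lambda>k. s0 < k) M"
  define S where "S = filter_mset (\<lambda>k. \<not> s0 < k) M"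
  have "M = T + S"
    unfolding T_def S_def by (rule multiset_partition)
  have "size T * (s0 - 2) = (\<Sum>k\<in>#T. s0 - 2)"
    by simp
  also have "\<dots> \<le> (\<Sum>k\<in>#T. k - 2)"
    by (intro sum_mset_mono) (auto simp: T_def)
  also have "\<dots> \<le> n"
    using sum \<open>M = T + S\<close> by (metis image_mset_union le_add1 order.trans sum_mset.union)
  finally have "real (size T) * real (s0 - 2) \<le> real n"
    by (metis of_nat_le_iff of_nat_mult)
  then have "real (size T) \<le> real n / real (s0 - 2)"
    using s0 by (simp add: field_simps)
  also have "\<dots> \<le> real n / (2 / \<delta>)"
    using s0 \<delta> by (intro divide_left_mono) auto
  finally have T: "real (size T) \<le> \<delta> * n / 2"
    by (simp add: mult.commute)
  have "size S = sum (count S) (set_mset S)"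
    by (simp add: size_multiset_overloaded_eq)
  also have "\<dots> \<le> sum (count S) {3..s0}"
    using ge3 by (intro sum_mono2) (auto simp: S_def)
  also have "\<dots> \<le> sum (count M) {3..s0}"
    by (intro sum_mono) (auto simp: S_def)
  finally have "real (size S) \<le> (\<Sum>s\<in>{3..s0}. real (count M s))"
    by (metis of_nat_le_iff of_nat_sum)
  also have "\<dots> < (\<Sum>s\<in>{3..s0}. \<delta> * n / (2 * (s0 - 2)))"
    using rare s0 by (intro sum_strict_mono) auto
  also have "\<dots> = \<delta> * n / 2"
    using s0 by (simp add: field_simps)
  finally show False
    using T size \<open>M = T + S\<close> by simp
qed

lemma prod_mset_image_nonneg:
  "(\<And>k. k \<in># N \<Longrightarrow> (0 :: 'a :: linordered_semidom) \<le> g k) \<Longrightarrow> 0 \<le> (\<Prod>k\<in>#N. g k)"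
  by (induction N) auto

text \<open>Replace q L faces of size s, where q = count M s div L, by q (s - 2) faces of size
  L + 2; this preserves the sum of sizes minus 2, and the weight gains a factor
  g (L + 2) ^ q / g s ^ (q L) \<ge> \<rho> ^ (q L).\<close>

lemma multiset_surgery:
  fixes g :: "nat \<Rightarrow> real" and M :: "nat multiset"
  assumes pos: "\<forall>k\<in>#M. g k > 0" and ge3: "\<forall>k\<in>#M. k \<ge> 3"
    and s: "s \<ge> 3" and L: "L \<ge> 1" "L \<le> count M s"
    and gain: "g (L + 2) \<ge> (\<rho> * g s) ^ L" "g (L + 2) \<ge> 1" and \<rho>: "\<rho> \<ge> 1"
  shows "\<exists>M'. (\<forall>k\<in>#M'. k \<ge> 3) \<and> M' \<noteq> {#} \<and>
    (\<Sum>k\<in>#M'. k - 2) = (\<Sum>k\<in>#M. k - 2) \<and>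
    \<rho> ^ (count M s - L) * (\<Prod>k\<in>#M. g k) \<le> (\<Prod>k\<in>#M'. g k)"
proof -
  define q where "q = count M s div L"
  define R where "R = replicate_mset (q * L) s"
  define M' where "M' = (M - R) + replicate_mset (q * (s - 2)) (L + 2)"
  have "q \<ge> 1"
    using L by (simp add: q_def Suc_le_eq div_greater_zero_iff)
  have "q * L \<le> count M s"
    by (simp add: q_def)
  then have M: "M = (M - R) + R"
    by (simp add: R_def subset_mset.diff_add count_le_replicate_mset_subset_eq[symmetric])
  have "(\<Sum>k\<in>#M'. k - 2) = (\<Sum>k\<in>#M - R. k - 2) + q * (s - 2) * L"
    by (simp add: M'_def)
  also have "\<dots> = (\<Sum>k\<in>#M. k - 2)"
    by (subst (2) M) (simp add: R_def)
  finally have sum: "(\<Sum>k\<in>#M'. k - 2) = (\<Sum>k\<in>#M. k - 2)" .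
  have "0 < count M s"
    using L by linarith
  then have "s \<in># M"
    by (rule count_greater_zero_iff[THEN iffD1])
  then have "g s > 0"
    using pos by blast
  have "count M s = q * L + count M s mod L" "count M s mod L < L"
    using L(1) by (simp_all add: q_def)
  then have "count M s < q * L + L"
    by linarith
  then have "\<rho> ^ (count M s - L) \<le> \<rho> ^ (q * L)"
    using \<rho> by (intro power_increasing) auto
  also have "\<rho> ^ (q * L) * g s ^ (q * L) = ((\<rho> * g s) ^ L) ^ q"
    by (simp add: power_mult power_mult_distrib mult.commute)
  also have "\<dots> \<le> g (L + 2) ^ q"
    using gain \<rho> \<open>g s > 0\<close> by (intro power_mono) auto
  also have "\<dots> \<le> g (L + 2) ^ (q * (s - 2))"
    using gain(2) s by (intro power_increasing) auto
  finally have factor: "\<rho> ^ (count M s - L) * g s ^ (q * L) \<le> g (L + 2) ^ (q * (s - 2))"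
    using \<open>g s > 0\<close> by (simp add: mult_right_mono)
  have "(\<Prod>k\<in>#M. g k) = (\<Prod>k\<in>#(M - R) + R. g k)"
    by (simp only: M[symmetric])
  then have "\<rho> ^ (count M s - L) * (\<Prod>k\<in>#M. g k) =
      (\<Prod>k\<in>#M - R. g k) * (\<rho> ^ (count M s - L) * g s ^ (q * L))"
    by (simp add: R_def)
  also have "\<dots> \<le> (\<Prod>k\<in>#M - R. g k) * g (L + 2) ^ (q * (s - 2))"
    using pos factor by (intro mult_left_mono prod_mset_image_nonneg) (auto dest: in_diffD intro: less_imp_le)
  also have "\<dots> = (\<Prod>k\<in>#M'. g k)"
    by (simp add: M'_def)
  finally have "\<rho> ^ (count M s - L) * (\<Prod>k\<in>#M. g k) \<le> (\<Prod>k\<in>#M'. g k)" .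
  moreover have "\<forall>k\<in>#M'. k \<ge> 3" "M' \<noteq> {#}"
    using ge3 L s \<open>q \<ge> 1\<close> by (auto simp: M'_def dest: in_diffD)
  ultimately show ?thesis
    using sum by blast
qed

section \<open>Dissections with many diagonals are negligible\<close>

lemma dweight_nonneg: "(\<And>k. k \<ge> 3 \<Longrightarrow> \<gamma> k \<ge> 0) \<Longrightarrow> dweight \<gamma> n D \<ge> 0"
  unfolding dweight_def using inner_face_card by (intro prod_nonneg) auto

lemma dweight_le_total_weight:
  "(\<And>k. k \<ge> 3 \<Longrightarrow> \<gamma> k \<ge> 0) \<Longrightarrow> D \<in> dissections n \<Longrightarrow> dweight \<gamma> n D \<le> total_weight \<gamma> n"
  unfolding total_weight_def using finite_dissections dweight_nonneg by (intro member_le_sum) auto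

lemma le_mult_diff_half:
  fixes \<beta> :: real and K c L n :: nat
  assumes K: "real K * \<beta> \<ge> 2" and c: "real c \<ge> \<beta> * n" "2 * L \<le> c"
  shows "n \<le> K * (c - L)"
proof -
  have "real (c - L) \<ge> \<beta> * n / 2"
    using c by (simp add: of_nat_diff)
  then have "real K * (\<beta> * n / 2) \<le> real K * real (c - L)"
    by (rule mult_left_mono) simp
  moreover have "2 * real n \<le> (real K * \<beta>) * real n"
    using K by (intro mult_right_mono) auto
  moreover have "real K * (\<beta> * n / 2) = (real K * \<beta>) * real n / 2"
    by simp
  ultimately have "real n \<le> real K * real (c - L)"
    by linarith
  then show ?thesis
    by (metis of_nat_le_iff of_nat_mult)
qed

lemma face_sizes_boost:
  fixes g :: "nat \<Rightarrow> real" and \<delta> :: real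
  assumes large: "\<And>H. H \<ge> 1 \<Longrightarrow> \<exists>L\<ge>1. g (L + 2) \<ge> H ^ L" and \<delta>: "\<delta> > 0"
  shows "\<exists>N. \<forall>n\<ge>N. \<forall>M. (\<forall>k\<in>#M. k \<ge> 3 \<and> g k > 0) \<longrightarrow> (\<Sum>k\<in>#M. k - 2) \<le> n \<longrightarrow>
    real (size M) \<ge> \<delta> * n \<longrightarrow> (\<exists>M'. (\<forall>k\<in>#M'. k \<ge> 3) \<and> M' \<noteq> {#} \<and>
      (\<Sum>k\<in>#M'. k - 2) = (\<Sum>k\<in>#M. k - 2) \<and> 32 ^ n * (\<Prod>k\<in>#M. g k) \<le> (\<Prod>k\<in>#M'. g k))"
proof -
  define s0 where "s0 = nat \<lceil>2 / \<delta>\<rceil> + 3"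
  have s0: "s0 \<ge> 3" "real (s0 - 2) \<ge> 2 / \<delta>"
    using real_nat_ceiling_ge[of "2 / \<delta>"] by (auto simp: s0_def)
  define \<beta> where "\<beta> = \<delta> / (2 * (s0 - 2))"
  have "\<beta> > 0"
    using \<delta> s0 by (simp add: \<beta>_def)
  define K where "K = nat \<lceil>2 / \<beta>\<rceil>"
  have "2 / \<beta> \<le> real K"
    unfolding K_def by (rule real_nat_ceiling_ge)
  then have K: "real K * \<beta> \<ge> 2"
    using \<open>\<beta> > 0\<close> by (simp add: pos_divide_le_eq)
  define \<rho> :: real where "\<rho> = 32 ^ K"
  define H where "H = \<rho> * max 1 (Max (g ` {3..s0}))"
  have "\<rho> \<ge> 1"
    by (simp add: \<rho>_def)
  then have "H \<ge> 1"
    unfolding H_def by (metis max.cobounded1 mult_le_cancel_left1 order.trans mult.commute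
        mult_right_mono zero_le_one mult_1)
  then obtain L where L: "L \<ge> 1" "g (L + 2) \<ge> H ^ L"
    using large by blast
  then have "g (L + 2) \<ge> 1"
    using \<open>H \<ge> 1\<close> one_le_power order.trans by blast
  define N where "N = nat \<lceil>2 * L / \<beta>\<rceil>"
  have "\<exists>M'. (\<forall>k\<in>#M'. k \<ge> 3) \<and> M' \<noteq> {#} \<and> (\<Sum>k\<in>#M'. k - 2) = (\<Sum>k\<in>#M. k - 2) \<and>
      32 ^ n * (\<Prod>k\<in>#M. g k) \<le> (\<Prod>k\<in>#M'. g k)"
    if n: "n \<ge> N" and M: "\<forall>k\<in>#M. k \<ge> 3 \<and> g k > 0" "(\<Sum>k\<in>#M. k - 2) \<le> n"
      "real (size M) \<ge> \<delta> * n" for n M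
  proof -
    obtain s where s: "3 \<le> s" "s \<le> s0" "real (count M s) \<ge> \<beta> * n"
      using exists_frequent_small_size[of M n \<delta> s0] M \<delta> s0 by (auto simp: \<beta>_def)
    have "\<beta> * n \<ge> 2 * L"
      using n real_nat_ceiling_ge[of "2 * L / \<beta>"] \<open>\<beta> > 0\<close> by (simp add: N_def field_simps)
    then have "2 * L \<le> count M s"
      using s(3) by linarith
    then have "s \<in># M"
      using L(1) count_greater_zero_iff[of M s] by linarith
    then have "g s > 0"
      using M(1) by blast
    moreover have "g s \<le> Max (g ` {3..s0})"
      using s by (intro Max_ge) auto
    ultimately have "\<rho> * g s \<le> H"
      using \<open>\<rho> \<ge> 1\<close> by (simp add: H_def)
    then have gain: "(\<rho> * g s) ^ L \<le> g (L + 2)"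
      using \<open>g s > 0\<close> \<open>\<rho> \<ge> 1\<close> L(2) by (meson order.trans power_mono mult_nonneg_nonneg less_imp_le
          zero_le_one order.trans[OF zero_le_one \<open>\<rho> \<ge> 1\<close>])
    obtain M' where M': "\<forall>k\<in>#M'. k \<ge> 3" "M' \<noteq> {#}" "(\<Sum>k\<in>#M'. k - 2) = (\<Sum>k\<in>#M. k - 2)"
        "\<rho> ^ (count M s - L) * (\<Prod>k\<in>#M. g k) \<le> (\<Prod>k\<in>#M'. g k)"
    proof -
      have "\<forall>k\<in>#M. g k > 0" "\<forall>k\<in>#M. k \<ge> 3" "L \<le> count M s"
        using M(1) \<open>2 * L \<le> count M s\<close> by auto
      from multiset_surgery[OF this(1,2) s(1) L(1) this(3) gain \<open>g (L + 2) \<ge> 1\<close> \<open>\<rho> \<ge> 1\<close>]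
      show thesis
        using that by (elim exE conjE)
    qed
    have "n \<le> K * (count M s - L)"
      by (rule le_mult_diff_half[OF K s(3) \<open>2 * L \<le> count M s\<close>])
    then have "32 ^ n \<le> \<rho> ^ (count M s - L)"
      unfolding \<rho>_def power_mult[symmetric] by (intro power_increasing) auto
    moreover have "(\<Prod>k\<in>#M. g k) \<ge> 0"
      using M(1) by (intro prod_mset_image_nonneg) (auto intro: less_imp_le)
    ultimately have "32 ^ n * (\<Prod>k\<in>#M. g k) \<le> (\<Prod>k\<in>#M'. g k)"
      using M'(4) by (meson mult_right_mono order.trans)
    then show ?thesis
      using M' by blast
  qed
  then show ?thesis
    by blast
qed

lemma heavy_dissections_negligible:
  fixes \<gamma> :: "nat \<Rightarrow> real" and \<delta> :: real
  assumes nonneg: "\<And>k. k \<ge> 3 \<Longrightarrow> \<gamma> k \<ge> 0"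
    and typeIII: "conv_radius (\<lambda>k. if k \<ge> 1 then \<gamma> (k + 2) else 0) = 0" and \<delta>: "\<delta> > 0"
  shows "\<exists>N. \<forall>n\<ge>N. \<forall>D\<in>dissections n. real (card D) \<ge> \<delta> * n \<longrightarrow>
    32 ^ n * dweight \<gamma> n D \<le> total_weight \<gamma> n"
proof -
  have "\<exists>N. \<forall>n\<ge>N. \<forall>M. (\<forall>k\<in>#M. k \<ge> 3 \<and> \<gamma> k > 0) \<longrightarrow> (\<Sum>k\<in>#M. k - 2) \<le> n \<longrightarrow>
    real (size M) \<ge> \<delta> * n \<longrightarrow> (\<exists>M'. (\<forall>k\<in>#M'. k \<ge> 3) \<and> M' \<noteq> {#} \<and>
      (\<Sum>k\<in>#M'. k - 2) = (\<Sum>k\<in>#M. k - 2) \<and> 32 ^ n * (\<Prod>k\<in>#M. \<gamma> k) \<le> (\<Prod>k\<in>#M'. \<gamma> k))"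
    by (rule face_sizes_boost) (use type_III_large_weight[OF nonneg typeIII] \<delta> in auto)
  then obtain N where N: "\<And>n M. n \<ge> N \<Longrightarrow> \<forall>k\<in>#M. k \<ge> 3 \<and> \<gamma> k > 0 \<Longrightarrow>
      (\<Sum>k\<in>#M. k - 2) \<le> n \<Longrightarrow> real (size M) \<ge> \<delta> * n \<Longrightarrow>
      \<exists>M'. (\<forall>k\<in>#M'. k \<ge> 3) \<and> M' \<noteq> {#} \<and>
        (\<Sum>k\<in>#M'. k - 2) = (\<Sum>k\<in>#M. k - 2) \<and> 32 ^ n * (\<Prod>k\<in>#M. \<gamma> k) \<le> (\<Prod>k\<in>#M'. \<gamma> k)"
    by blast
  have "32 ^ n * dweight \<gamma> n D \<le> total_weight \<gamma> n"
    if n: "n \<ge> max N 3" and D: "D \<in> dissections n" and heavy: "real (card D) \<ge> \<delta> * n" for n D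
  proof (cases "dweight \<gamma> n D = 0")
    case True
    then show ?thesis
      using dweight_le_total_weight[of \<gamma>, OF nonneg D] dweight_nonneg[of \<gamma>, OF nonneg, of n D] by simp
  next
    case False
    let ?M = "face_sizes n D"
    have "\<forall>k\<in>#?M. k \<ge> 3 \<and> \<gamma> k > 0"
      using False face_sizes_ge_3 nonneg unfolding dweight_face_sizes
      by (metis le_less prod_mset_zero_iff image_eqI set_image_mset)
    moreover have "(\<Sum>k\<in>#?M. k - 2) \<le> n" "real (size ?M) \<ge> \<delta> * n"
      using sum_face_sizes[OF D] card_inner_faces[OF D] heavy n by (auto simp: size_face_sizes)
    ultimately obtain M' where M': "\<forall>k\<in>#M'. k \<ge> 3" "M' \<noteq> {#}"
        "(\<Sum>k\<in>#M'. k - 2) + 2 = n" "32 ^ n * dweight \<gamma> n D \<le> (\<Prod>k\<in>#M'. \<gamma> k)"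
      using N[of n ?M] sum_face_sizes[OF D] n unfolding dweight_face_sizes by auto
    then obtain D' where "D' \<in> dissections n" "face_sizes n D' = M'"
      using face_sizes_realizable by blast
    then show ?thesis
      using M'(4) dweight_le_total_weight[of \<gamma>, OF nonneg] unfolding dweight_face_sizes
      by (metis order.trans)
  qed
  then show ?thesis
    by blast
qed

text \<open>Light dissections contribute at most \<delta> n diagonals each; heavy ones, of which there
  are at most 16^n, carry weight at most 32^-n times the total.\<close>

lemma weighted_diagonal_count_le:
  fixes \<gamma> :: "nat \<Rightarrow> real" and \<delta> :: real
  assumes nonneg: "\<And>k. k \<ge> 3 \<Longrightarrow> \<gamma> k \<ge> 0"
    and typeIII: "conv_radius (\<lambda>k. if k \<ge> 1 then \<gamma> (k + 2) else 0) = 0" and \<delta>: "\<delta> > 0"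
  shows "\<forall>\<^sub>F n in sequentially. (\<Sum>D\<in>dissections n. dweight \<gamma> n D * card D)
    \<le> (\<delta> + (1 / 2) ^ n) * n * total_weight \<gamma> n"
proof -
  obtain N where N: "\<And>n D. n \<ge> N \<Longrightarrow> D \<in> dissections n \<Longrightarrow> real (card D) \<ge> \<delta> * n \<Longrightarrow>
      32 ^ n * dweight \<gamma> n D \<le> total_weight \<gamma> n"
    using heavy_dissections_negligible[OF nonneg typeIII \<delta>] by blast
  have "(\<Sum>D\<in>dissections n. dweight \<gamma> n D * card D) \<le> (\<delta> + (1 / 2) ^ n) * n * total_weight \<gamma> n"
    if n: "n \<ge> max N 3" for n
  proof -
    define W where "W = total_weight \<gamma> n"
    have "W \<ge> 0"
      unfolding W_def total_weight_def using dweight_nonneg[of \<gamma>, OF nonneg] by (simp add: sum_nonneg)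
    have each: "dweight \<gamma> n D * card D \<le> dweight \<gamma> n D * (\<delta> * n) + n * (W / 32 ^ n)"
      if D: "D \<in> dissections n" for D
    proof (cases "real (card D) \<ge> \<delta> * n")
      case True
      then have "dweight \<gamma> n D \<le> W / 32 ^ n"
        using N[OF _ D] n by (simp add: W_def field_simps)
      moreover have "card D \<le> n"
        using card_dissection_le[OF D] n by simp
      ultimately have "dweight \<gamma> n D * card D \<le> W / 32 ^ n * n"
        using dweight_nonneg[of \<gamma>, OF nonneg] \<open>W \<ge> 0\<close> by (intro mult_mono) auto
      then show ?thesis
        using dweight_nonneg[of \<gamma>, OF nonneg, of n D] \<delta> by (simp add: mult.commute add_increasing)
    next
      case False
      then show ?thesis
        using dweight_nonneg[of \<gamma>, OF nonneg, of n D] \<open>W \<ge> 0\<close>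
        by (simp add: mult_left_mono add_increasing2)
    qed
    have "(\<Sum>D\<in>dissections n. dweight \<gamma> n D * card D)
        \<le> (\<Sum>D\<in>dissections n. dweight \<gamma> n D * (\<delta> * n) + n * (W / 32 ^ n))"
      using each by (rule sum_mono)
    also have "\<dots> = W * (\<delta> * n) + card (dissections n) * (n * (W / 32 ^ n))"
      by (simp add: sum.distrib W_def total_weight_def sum_distrib_right)
    also have "\<dots> \<le> W * (\<delta> * n) + 16 ^ n * (n * (W / 32 ^ n))"
    proof -
      have "card (dissections n) \<le> 16 ^ n"
        using card_dissections_le n by simp
      then have "real (card (dissections n)) \<le> 16 ^ n"
        by (metis of_nat_le_iff of_nat_numeral of_nat_power)
      then show ?thesis
        using \<open>W \<ge> 0\<close> by (intro add_left_mono mult_right_mono) auto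
    qed
    also have "\<dots> = (\<delta> + (1 / 2) ^ n) * n * W"
      by (simp add: field_simps flip: power_mult_distrib)
    finally show ?thesis
      by (simp add: W_def)
  qed
  then show ?thesis
    unfolding eventually_sequentially by blast
qed

lemma diagonal_density_tendsto_0:
  fixes \<gamma> :: "nat \<Rightarrow> real"
  assumes nonneg: "\<And>k. k \<ge> 3 \<Longrightarrow> \<gamma> k \<ge> 0"
    and typeIII: "conv_radius (\<lambda>k. if k \<ge> 1 then \<gamma> (k + 2) else 0) = 0"
  shows "((\<lambda>n. (\<Sum>D\<in>dissections n. dweight \<gamma> n D * card D) / (n * total_weight \<gamma> n)) \<longlongrightarrow> 0)
    (inf sequentially (principal {n. n \<ge> 3 \<and> total_weight \<gamma> n > 0}))"
proof (rule tendstoI)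
  fix \<epsilon> :: real assume "\<epsilon> > 0"
  have "\<forall>\<^sub>F n in sequentially. (\<Sum>D\<in>dissections n. dweight \<gamma> n D * card D)
      \<le> (\<epsilon> / 2 + (1 / 2) ^ n) * n * total_weight \<gamma> n"
    using weighted_diagonal_count_le[OF nonneg typeIII] \<open>\<epsilon> > 0\<close> by simp
  moreover have "\<forall>\<^sub>F n in sequentially. (1 / 2 :: real) ^ n < \<epsilon> / 2"
    using \<open>\<epsilon> > 0\<close> by (intro order_tendstoD(2)[OF LIMSEQ_power_zero]) auto
  ultimately have "\<forall>\<^sub>F n in sequentially. n \<in> {n. n \<ge> 3 \<and> total_weight \<gamma> n > 0} \<longrightarrow>
      dist ((\<Sum>D\<in>dissections n. dweight \<gamma> n D * card D) / (n * total_weight \<gamma> n)) 0 < \<epsilon>"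
  proof eventually_elim
    case (elim n)
    show ?case
    proof
      assume n: "n \<in> {n. n \<ge> 3 \<and> total_weight \<gamma> n > 0}"
      then have pos: "real n * total_weight \<gamma> n > 0"
        by simp
      have "(\<Sum>D\<in>dissections n. dweight \<gamma> n D * card D) \<ge> 0"
        using dweight_nonneg[of \<gamma>, OF nonneg] by (intro sum_nonneg) simp
      moreover have "(\<epsilon> / 2 + (1 / 2) ^ n) * (n * total_weight \<gamma> n) < \<epsilon> * (n * total_weight \<gamma> n)"
        using elim(2) pos by (intro mult_strict_right_mono) auto
      then have "(\<Sum>D\<in>dissections n. dweight \<gamma> n D * card D) < \<epsilon> * (n * total_weight \<gamma> n)"
        using elim(1) by (simp add: mult.assoc)
      ultimately show "dist ((\<Sum>D\<in>dissections n. dweight \<gamma> n D * card D) / (n * total_weight \<gamma> n)) 0 < \<epsilon>"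
        using pos by (simp add: dist_real_def pos_divide_less_eq)
    qed
  qed
  then show "\<forall>\<^sub>F n in inf sequentially (principal {n. n \<ge> 3 \<and> total_weight \<gamma> n > 0}).
      dist ((\<Sum>D\<in>dissections n. dweight \<gamma> n D * card D) / (n * total_weight \<gamma> n)) 0 < \<epsilon>"
    by (simp add: eventually_inf_principal)
qed

section \<open>Balls around vertices far from diagonals\<close>

lemma poly_sides_iff_mod:
  assumes "x < n" "y < n" "x \<noteq> y" and n: "n \<ge> 3"
  shows "(min x y, max x y) \<in> poly_sides n \<longleftrightarrow>
    (int x - int y) mod int n = 1 \<or> (int y - int x) mod int n = 1"
proof -
  have small_mod: "d mod int n = (if d \<ge> 0 then d else d + int n)" if "- int n < d" "d < int n" for d
  proof (cases "d \<ge> 0")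
    case False
    have "d mod int n = (d + int n) mod int n"
      by simp
    also have "\<dots> = d + int n"
      using that False by (intro mod_pos_pos_trivial) auto
    finally show ?thesis
      using False by simp
  qed (use that in simp)
  show ?thesis
    using small_mod[of "int x - int y"] small_mod[of "int y - int x"] assms
    by (auto simp: poly_sides_iff min_def max_def)
qed

lemma adj_non_endpoint:
  assumes "x \<notin> endpoints D"
  shows "adj n D x y \<longleftrightarrow> x \<noteq> y \<and> (min x y, max x y) \<in> poly_sides n"
proof -
  have "(min x y, max x y) \<notin> D"
    using assms unfolding endpoints_def min_def max_def by (auto simp: image_iff)
  then show ?thesis
    by (auto simp: adj_def edges_def)
qed

lemma adj_less: "D \<in> dissections n \<Longrightarrow> n \<ge> 2 \<Longrightarrow> adj n D x y \<Longrightarrow> x < n \<and> y < n"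
  by (auto simp: adj_def edges_def poly_sides_iff min_def max_def split: if_splits dest: dissectionsD)

definition around :: "nat \<Rightarrow> nat \<Rightarrow> int \<Rightarrow> nat" where
  "around n v j = nat ((int v + j) mod int n)"

lemma int_around: "n > 0 \<Longrightarrow> int (around n v j) = (int v + j) mod int n"
  by (simp add: around_def)

lemma around_less: "n > 0 \<Longrightarrow> around n v j < n"
  using int_around[of n v j] by (metis of_nat_less_iff pos_mod_bound of_nat_0_less_iff)

text \<open>Since n \<ge> 2 k + 3, the vertices within k steps of v around the polygon are distinct;
  if none of them is an endpoint of a diagonal, the ball of radius k around v is the path of
  polygon sides through them.\<close>

context
  fixes n :: nat and D v k
  assumes D: "D \<in> dissections n" and nk: "n \<ge> 2 * k + 3" and v: "v < n"
    and free: "\<And>j. - int k \<le> j \<Longrightarrow> j \<le> int k \<Longrightarrow> around n v j \<notin> endpoints D"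
begin

private abbreviation P where "P \<equiv> around n v"

private lemma n_pos: "n > 0"
  using nk by simp

private lemma P_0: "P 0 = v"
  using v by (simp add: around_def)

private lemma P_diff: "(int (P i) - int (P j)) mod int n = (i - j) mod int n"
  using n_pos by (simp add: int_around mod_diff_eq)

private lemma small_mod_eq_iff:
  assumes "- (2 * int k) \<le> d" "d \<le> 2 * int k" "0 \<le> c" "c < int n - 2 * int k"
  shows "d mod int n = c \<longleftrightarrow> d = c"
proof (cases "d \<ge> 0")
  case True
  then show ?thesis
    using assms nk by (simp add: mod_pos_pos_trivial)
next
  case False
  have "d mod int n = (d + int n) mod int n"
    by simp
  also have "\<dots> = d + int n"
    using assms nk False by (intro mod_pos_pos_trivial) auto
  finally show ?thesis
    using assms False by auto
qed

private lemma P_inj: "inj_on P {- int k..int k}"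
proof (rule inj_onI)
  fix i j assume "i \<in> {- int k..int k}" "j \<in> {- int k..int k}" "P i = P j"
  then show "i = j"
    using P_diff[of i j] small_mod_eq_iff[of "i - j" 0] nk by auto
qed

private lemma adj_P_iff:
  assumes "i \<in> {- int k..int k}" "j \<in> {- int k..int k}"
  shows "adj n D (P i) (P j) \<longleftrightarrow> \<bar>i - j\<bar> = 1"
proof (cases "i = j")
  case False
  then have "P i \<noteq> P j"
    using P_inj assms by (auto dest: inj_onD)
  have "adj n D (P i) (P j) \<longleftrightarrow> (int (P i) - int (P j)) mod int n = 1 \<or> (int (P j) - int (P i)) mod int n = 1"
    using adj_non_endpoint[OF free] poly_sides_iff_mod[OF around_less around_less \<open>P i \<noteq> P j\<close>] n_pos nk assms
      \<open>P i \<noteq> P j\<close> by auto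
  also have "\<dots> \<longleftrightarrow> i - j = 1 \<or> j - i = 1"
    using P_diff small_mod_eq_iff[of "i - j" 1] small_mod_eq_iff[of "j - i" 1] assms nk by auto
  finally show ?thesis
    by auto
qed (simp add: adj_def)

private lemma P_succ:
  assumes "x < n" "(int x - int (P i)) mod int n = 1"
  shows "x = P (i + 1)"
proof -
  have "int x = ((int x - int (P i)) mod int n + int (P i)) mod int n"
    using assms(1) by (simp add: mod_add_left_eq)
  also have "\<dots> = (int v + (i + 1)) mod int n"
    using assms(2) n_pos by (simp add: int_around mod_add_right_eq algebra_simps)
  finally show ?thesis
    using n_pos by (simp add: around_def)
qed

private lemma P_pred:
  assumes "x < n" "(int (P i) - int x) mod int n = 1"
  shows "x = P (i - 1)"
proof -
  have "int x = (int (P i) - (int (P i) - int x) mod int n) mod int n"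
    using assms(1) by (simp add: mod_diff_right_eq)
  also have "\<dots> = (int v + (i - 1)) mod int n"
    using assms(2) n_pos by (simp add: int_around mod_diff_left_eq algebra_simps)
  finally show ?thesis
    using n_pos by (simp add: around_def)
qed

private abbreviation "E \<equiv> {(x, y). adj n D x y}"

private lemma reachable_in_window:
  "m \<le> k \<Longrightarrow> (v, x) \<in> E ^^ m \<Longrightarrow> x \<in> P ` {- int m..int m}"
proof (induction m arbitrary: x)
  case 0
  then show ?case
    using P_0 by force
next
  case (Suc m)
  then obtain y where y: "(v, y) \<in> E ^^ m" "adj n D y x"
    by auto
  moreover have "y \<in> P ` {- int m..int m}"
    using Suc.IH y(1) Suc.prems(1) by simp
  ultimately obtain i where i: "y = P i" "i \<in> {- int m..int m}"
    by auto
  then have "y \<notin> endpoints D"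
    using free Suc.prems(1) by auto
  moreover have "x < n" "y \<noteq> x"
    using adj_less[OF D _ y(2)] nk y(2) by (auto simp: adj_def)
  ultimately have "(int y - int x) mod int n = 1 \<or> (int x - int y) mod int n = 1"
    using y(2) adj_non_endpoint poly_sides_iff_mod[of y n x] i around_less[OF n_pos] nk by auto
  then have "x = P (i + 1) \<or> x = P (i - 1)"
    using P_succ[OF \<open>x < n\<close>] P_pred[OF \<open>x < n\<close>] i by auto
  then show ?case
    using i by force
qed

private lemma reach_ends: "m \<le> k \<Longrightarrow> (v, P (int m)) \<in> E ^^ m \<and> (v, P (- int m)) \<in> E ^^ m"
proof (induction m)
  case 0
  then show ?case
    using P_0 by simp
next
  case (Suc m)
  then have "adj n D (P (int m)) (P (int (Suc m)))" "adj n D (P (- int m)) (P (- int (Suc m)))"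
    using adj_P_iff by simp_all
  then show ?case
    using Suc by (auto intro: relpow_Suc_I)
qed

private lemma ball_set_eq: "ball_set n D v k = P ` {- int k..int k}"
proof
  show "ball_set n D v k \<subseteq> P ` {- int k..int k}"
    using reachable_in_window by (fastforce simp: ball_set_def)
  show "P ` {- int k..int k} \<subseteq> ball_set n D v k"
  proof
    fix x assume "x \<in> P ` {- int k..int k}"
    then obtain j where j: "x = P j" "j \<in> {- int k..int k}"
      by auto
    then have "nat \<bar>j\<bar> \<le> k" "j = int (nat \<bar>j\<bar>) \<or> j = - int (nat \<bar>j\<bar>)"
      by auto
    then have "(v, x) \<in> E ^^ nat \<bar>j\<bar>"
      using reach_ends[OF \<open>nat \<bar>j\<bar> \<le> k\<close>] j(1) by auto
    then show "x \<in> ball_set n D v k"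
      unfolding ball_set_def using \<open>nat \<bar>j\<bar> \<le> k\<close> by blast
  qed
qed

lemma ball_is_path_if_window_free: "ball_is_path n D v k"
  unfolding ball_is_path_def
proof (intro exI conjI)
  show "bij_betw P {- int k..int k} (ball_set n D v k)"
    unfolding ball_set_eq using P_inj by (simp add: bij_betw_def)
qed (use P_0 adj_P_iff in auto)

end

lemma card_not_ball_is_path_le:
  assumes D: "D \<in> dissections n" and nk: "n \<ge> 2 * k + 3"
  shows "card {v\<in>{..<n}. \<not> ball_is_path n D v k} \<le> 2 * card D * (2 * k + 1)"
proof -
  define A where "A u = (\<lambda>j. nat ((int u - j) mod int n)) ` {- int k..int k}" for u
  have bad: "{v\<in>{..<n}. \<not> ball_is_path n D v k} \<subseteq> (\<Union>u\<in>endpoints D. A u)"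
  proof
    fix v assume "v \<in> {v\<in>{..<n}. \<not> ball_is_path n D v k}"
    then have v: "v < n" "\<not> ball_is_path n D v k"
      by auto
    then obtain j where j: "- int k \<le> j" "j \<le> int k" "around n v j \<in> endpoints D"
      using ball_is_path_if_window_free[OF D nk] by blast
    have "(int (around n v j) - j) mod int n = int v"
      using v nk by (simp add: around_def mod_diff_left_eq)
    then have "v \<in> A (around n v j)"
      using j unfolding A_def by force
    then show "v \<in> (\<Union>u\<in>endpoints D. A u)"
      using j by blast
  qed
  have fin: "finite (endpoints D)"
    using finite_dissection[OF D] by (simp add: endpoints_def)
  have "card {v\<in>{..<n}. \<not> ball_is_path n D v k} \<le> card (\<Union>u\<in>endpoints D. A u)"
    using bad fin by (intro card_mono) (auto simp: A_def)
  also have "\<dots> \<le> (\<Sum>u\<in>endpoints D. card (A u))"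
    using fin by (rule card_UN_le)
  also have "\<dots> \<le> card (endpoints D) * (2 * k + 1)"
  proof -
    have "card (A u) \<le> card {- int k..int k}" for u
      unfolding A_def by (rule card_image_le) simp
    moreover have "card {- int k..int k} = 2 * k + 1"
      by simp
    ultimately have "card (A u) \<le> 2 * k + 1" for u
      by metis
    then show ?thesis
      using sum_bounded_above[of "endpoints D" "\<lambda>u. card (A u)" "2 * k + 1"] by simp
  qed
  also have "\<dots> \<le> 2 * card D * (2 * k + 1)"
  proof (rule mult_right_mono)
    have "card (endpoints D) \<le> card (fst ` D) + card (snd ` D)"
      unfolding endpoints_def by (rule card_Un_le)
    also have "\<dots> \<le> card D + card D"
      by (intro add_mono card_image_le finite_dissection[OF D])
    finally show "card (endpoints D) \<le> 2 * card D"
      by simp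
  qed simp
  finally show ?thesis .
qed

section \<open>Convergence\<close>

lemma prob_ball_path_bounds:
  fixes \<gamma> :: "nat \<Rightarrow> real"
  assumes nonneg: "\<And>k. k \<ge> 3 \<Longrightarrow> \<gamma> k \<ge> 0" and nk: "n \<ge> 2 * k + 3" and W: "total_weight \<gamma> n > 0"
  shows "1 - real (4 * k + 2) * ((\<Sum>D\<in>dissections n. dweight \<gamma> n D * card D) / (n * total_weight \<gamma> n))
      \<le> prob_ball_path \<gamma> n k"
    and "prob_ball_path \<gamma> n k \<le> 1"
proof -
  define W where "W = total_weight \<gamma> n"
  define G where "G D = real (card {v\<in>{..<n}. ball_is_path n D v k})" for D
  define c where "c = real (4 * k + 2)"
  have pos: "real n * W > 0"
    using W nk by (simp add: W_def)
  have prob: "prob_ball_path \<gamma> n k = (\<Sum>D\<in>dissections n. dweight \<gamma> n D * G D) / (real n * W)"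
    by (simp add: prob_ball_path_def W_def G_def)
  have w: "dweight \<gamma> n D \<ge> 0" for D
    using dweight_nonneg[of \<gamma>, OF nonneg] .
  have "G D \<le> n" for D
    using card_mono[of "{..<n}" "{v\<in>{..<n}. ball_is_path n D v k}"] by (auto simp: G_def)
  then have "(\<Sum>D\<in>dissections n. dweight \<gamma> n D * G D) \<le> (\<Sum>D\<in>dissections n. dweight \<gamma> n D * n)"
    using w by (intro sum_mono mult_left_mono) auto
  also have "\<dots> = n * W"
    by (simp add: W_def total_weight_def sum_distrib_left mult.commute)
  finally show "prob_ball_path \<gamma> n k \<le> 1"
    unfolding prob using pos by simp
  have "n - c * card D \<le> G D" if "D \<in> dissections n" for D
  proof -
    have "{..<n} = {v\<in>{..<n}. ball_is_path n D v k} \<union> {v\<in>{..<n}. \<not> ball_is_path n D v k}"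
      by auto
    then have "n \<le> card {v\<in>{..<n}. ball_is_path n D v k} + card {v\<in>{..<n}. \<not> ball_is_path n D v k}"
      by (metis card_Un_le card_lessThan)
    then have "n \<le> card {v\<in>{..<n}. ball_is_path n D v k} + 2 * card D * (2 * k + 1)"
      using card_not_ball_is_path_le[OF that nk] by linarith
    then have "real n \<le> G D + real (2 * card D * (2 * k + 1))"
      unfolding G_def by (metis of_nat_add of_nat_le_iff)
    then show ?thesis
      by (simp add: c_def algebra_simps)
  qed
  then have "(\<Sum>D\<in>dissections n. dweight \<gamma> n D * (n - c * card D)) \<le> (\<Sum>D\<in>dissections n. dweight \<gamma> n D * G D)"
    using w by (intro sum_mono mult_left_mono) auto
  moreover have "(\<Sum>D\<in>dissections n. dweight \<gamma> n D * (n - c * card D)) =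
      n * W - c * (\<Sum>D\<in>dissections n. dweight \<gamma> n D * card D)"
    by (simp add: W_def total_weight_def right_diff_distrib sum_subtractf sum_distrib_left
        sum_distrib_right mult.commute mult.left_commute)
  moreover have "n * W - c * (\<Sum>D\<in>dissections n. dweight \<gamma> n D * card D) =
      n * W * (1 - c * ((\<Sum>D\<in>dissections n. dweight \<gamma> n D * card D) / (n * W)))"
  proof -
    have scale: "N * (1 - c * (S / N)) = N - c * S" if "N \<noteq> 0" for N S :: real
      using that by (simp add: right_diff_distrib)
    show ?thesis
      by (rule scale[symmetric]) (use pos in linarith)
  qed
  ultimately show "1 - real (4 * k + 2) * ((\<Sum>D\<in>dissections n. dweight \<gamma> n D * card D) / (n * total_weight \<gamma> n))
      \<le> prob_ball_path \<gamma> n k"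
    unfolding prob using pos by (simp add: W_def c_def le_divide_eq mult.commute)
qed

theorem mainTheorem16:
  fixes \<gamma> :: "nat \<Rightarrow> real"
  assumes nonneg: "\<And>k. k \<ge> 3 \<Longrightarrow> \<gamma> k \<ge> 0"
    and somepos: "\<exists>k\<ge>3. \<gamma> k > 0"
    and typeIII: "conv_radius (\<lambda>k. if k \<ge> 1 then \<gamma> (k + 2) else 0) = 0"
  shows "\<forall>k::nat. ((\<lambda>n. prob_ball_path \<gamma> n k) \<longlongrightarrow> 1)
           (inf sequentially (principal {n. n \<ge> 3 \<and> total_weight \<gamma> n > 0}))"
proof
  fix k :: nat
  let ?F = "inf sequentially (principal {n. n \<ge> 3 \<and> total_weight \<gamma> n > 0})"
  define density where "density n = (\<Sum>D\<in>dissections n. dweight \<gamma> n D * card D) / (n * total_weight \<gamma> n)" for n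
  have "(density \<longlongrightarrow> 0) ?F"
    unfolding density_def by (rule diagonal_density_tendsto_0[OF nonneg typeIII])
  then have lower: "((\<lambda>n. 1 - real (4 * k + 2) * density n) \<longlongrightarrow> 1) ?F"
    by (auto intro!: tendsto_eq_intros)
  have "\<forall>\<^sub>F n in ?F. n \<ge> 2 * k + 3 \<and> total_weight \<gamma> n > 0"
    unfolding eventually_inf_principal by (simp add: eventually_sequentially) blast
  then have "\<forall>\<^sub>F n in ?F. 1 - real (4 * k + 2) * density n \<le> prob_ball_path \<gamma> n k"
      "\<forall>\<^sub>F n in ?F. prob_ball_path \<gamma> n k \<le> 1"
    using prob_ball_path_bounds[OF nonneg] unfolding density_def by (auto elim: eventually_mono)
  then show "((\<lambda>n. prob_ball_path \<gamma> n k) \<longlongrightarrow> 1) ?F"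
    by (rule tendsto_sandwich[OF _ _ lower tendsto_const])
qed

end
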